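(* Let $\Omega\subset\mathbb{R}^N$ be an open domain, assume $C_b^\infty(\mathbb{R}^N)\subset\mathcal{X}$, let $g\in\overline{\mathcal{X}}$, and for each $\rho>0$ let $\mathcal{A}_\rho:\Omega\times\mathcal{X}\times\mathbb{R}\to\mathbb{R}$ satisfy assumptions (a), (b), (c) below. Assume the scheme is consistent and weakly stable, with $\{u_\rho\}_{\rho>0}$ the uniformly bounded family of viscosity solutions of the DPP given by weak stability. Assume moreover the strong uniqueness property: whenever $u$ is an upper semicontinuous viscosity subsolution and $v$ is a lower semicontinuous viscosity supersolution of the problem $F(x,u,\nabla u,D^2u)=0$ in $\Omega$, $u=g$ on $\partial\Omega$, then $u\le v$ in $\overline\Omega$. Then, as $\rho\to0^+$, $u_\rho$ converges locally uniformly to the unique viscosity solution of this boundary value problem.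
   Context: $\overline{\mathcal{X}}$ is the set of bounded functions $\mathbb{R}^N\to\mathbb{R}$, $\mathcal{X}\subset\overline{\mathcal{X}}$ a fixed subset. Assumptions on each $\mathcal{A}_\rho$: (a) $\varphi_1\le\varphi_2$ implies $\mathcal{A}_\rho(x,\varphi_2,s)\le\mathcal{A}_\rho(x,\varphi_1,s)$; (b) $s_1\le s_2$ implies $\mathcal{A}_\rho(x,\varphi,s_1)\le\mathcal{A}_\rho(x,\varphi,s_2)$; (c) for each $(x,\varphi)$, $s\mapsto\mathcal{A}_\rho(x,\varphi,s)$ has exactly one zero. DPP: $\mathcal{A}_\rho(x,u,u(x))=0$ for $x\in\Omega$, $u=g$ on $\mathbb{R}^N\setminus\Omega$. A viscosity supersolution of the DPP is $u\in\overline{\mathcal{X}}$ with $u\ge g$ on $\mathbb{R}^N\setminus\Omega$ and, for each $x\in\Omega$, $\mathcal{A}_\rho(x,\varphi,u(x))\ge0$ for all $\varphi\in\mathcal{X}$ with $\varphi\le u$; a viscosity subsolution is $u\in\overline{\mathcal{X}}$ with $u\le g$ on $\mathbb{R}^N\setminus\Omega$ and, for each $x\in\Omega$, $\mathcal{A}_\rho(x,\varphi,u(x))\le0$ for all $\varphi\in\mathcal{X}$ with $\varphi\ge u$; a viscosity solution is both. $\mathcal{B}_\rho(x,\varphi,s):=\mathcal{A}_\rho(x,\varphi,s)$ for $x\in\Omega$ and $:=s-g(x)$ for $x\in\mathbb{R}^N\setminus\Omega$. $F:\Omega\times\mathbb{R}\times\mathbb{R}^N\times S^N\to\mathbb{R}$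 is proper (nondecreasing in the second variable) and elliptic ($F(x,s,p,\overline M)\le F(x,s,p,\underline M)$ whenever $\overline M\ge\underline M$). For a function $z$ on a set $C$, $z^*(x)=\limsup_{y\to x,\,y\in C}z(y)$, $z_*(x)=\liminf_{y\to x,\,y\in C}z(y)$ (for $F$ in all variables, defined for $x\in\overline\Omega$). Consistency: for all $x\in\overline\Omega$ and $\varphi\in C_b^\infty(\mathbb{R}^N)$ there is a positive modulus $\omega$ (continuous, strictly increasing, $\omega(0)=0$) with $\limsup_{\rho\to0^+,y\to x,\xi\to0}\mathcal{B}_\rho(y,\varphi+\xi,\varphi(y)+\xi+\omega(\rho))\le F^*(x,\varphi(x),\nabla\varphi(x),D^2\varphi(x))$ if $x\in\Omega$, $\le\max\{\varphi(x)-g_*(x),F^*(\cdot)\}$ if $x\in\partial\Omega$; and $\liminf_{\rho\to0^+,y\to x,\xi\to0}\mathcal{B}_\rho(y,\varphi+\xi,\varphi(y)+\xi-\omega(\rho))\ge F_*(x,\varphi(x),\nabla\varphi(x),D^2\varphi(x))$ if $x\in\Omega$, $\ge\min\{\varphi(x)-g^*(x),F_*(\cdot)\}$ if $x\in\partial\Omega$ (with the same arguments of $F^*,F_*$). Weak stability: for every $\rho>0$ there exists a viscosity solution $u_\rho\in\overline{\mathcal{X}}$ of the DPP, with $\sup|u_\rho|$ bounded independently of $\rho$. Viscosity solutions of the PDE problem: $u\in\overline{\mathcal{X}}$ is a viscosity subsolution if for all $\varphi\in C_b^\infty(\mathbb{R}^N)$ and $x\in\overline\Omega$ where $u^*-\varphi$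 attains its global maximum over $\overline\Omega$: $F_*(x,u^*(x),\nabla\varphi(x),D^2\varphi(x))\le0$ if $x\in\Omega$, and $\min\{u^*(x)-g^*(x),F_*(x,u^*(x),\nabla\varphi(x),D^2\varphi(x))\}\le0$ if $x\in\partial\Omega$. It is a supersolution if for all such $\varphi$ and $x\in\overline\Omega$ where $u_*-\varphi$ attains its global minimum: $F^*(x,u_*(x),\nabla\varphi(x),D^2\varphi(x))\ge0$ if $x\in\Omega$, and $\max\{u_*(x)-g_*(x),F^*(x,u_*(x),\nabla\varphi(x),D^2\varphi(x))\}\ge0$ if $x\in\partial\Omega$. A viscosity solution is both. *)

theory Defs
  imports "HOL-Analysis.Analysis" "HOL-Library.Liminf_Limsup"
begin

text \<open>Points of R^N are vectors real^'n (N = CARD('n)).\<close>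

definition partial_deriv :: "'n::finite \<Rightarrow> (real^'n \<Rightarrow> real) \<Rightarrow> real^'n \<Rightarrow> real" where
  "partial_deriv i f x = frechet_derivative f (at x) (axis i 1)"

definition grad :: "(real^'n::finite \<Rightarrow> real) \<Rightarrow> real^'n \<Rightarrow> real^'n" where
  "grad f x = (\<chi> i. partial_deriv i f x)"

definition hess :: "(real^'n::finite \<Rightarrow> real) \<Rightarrow> real^'n \<Rightarrow> real^'n^'n" where
  "hess f x = (\<chi> i j. partial_deriv j (partial_deriv i f) x)"

fun Cbk :: "nat \<Rightarrow> (real^'n::finite \<Rightarrow> real) \<Rightarrow> bool" where
  "Cbk 0 f = (continuous_on UNIV f \<and> bounded (range f))"
| "Cbk (Suc k) f = (continuous_on UNIV f \<and> bounded (range f) \<and> f differentiable_on UNIV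
                    \<and> (\<forall>i. Cbk k (partial_deriv i f)))"

definition Cb_inf :: "(real^'n::finite \<Rightarrow> real) set" where
  "Cb_inf = {f. \<forall>k. Cbk k f}"

definition Xbar :: "(real^'n::finite \<Rightarrow> real) set" where
  "Xbar = {u. bounded (range u)}"

definition Sym :: "(real^'n::finite^'n) set" where
  "Sym = {M. transpose M = M}"

definition mat_ge :: "real^'n::finite^'n \<Rightarrow> real^'n^'n \<Rightarrow> bool" where
  "mat_ge A B = (\<forall>\<xi>. \<xi> \<bullet> ((A - B) *v \<xi>) \<ge> 0)"

definition proper_F :: "(real^'n::finite) set \<Rightarrow> (real^'n \<Rightarrow> real \<Rightarrow> real^'n \<Rightarrow> real^'n^'n \<Rightarrow> real) \<Rightarrow> bool" where
  "proper_F \<Omega> F = (\<forall>x\<in>\<Omega>. \<forall>s1 s2 p M. M \<in> Sym \<and> s1 \<le> s2 \<longrightarrow> F x s1 p M \<le> F x s2 p M)"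

definition elliptic_F :: "(real^'n::finite) set \<Rightarrow> (real^'n \<Rightarrow> real \<Rightarrow> real^'n \<Rightarrow> real^'n^'n \<Rightarrow> real) \<Rightarrow> bool" where
  "elliptic_F \<Omega> F = (\<forall>x\<in>\<Omega>. \<forall>s p M1 M2. M1 \<in> Sym \<and> M2 \<in> Sym \<and> mat_ge M1 M2
       \<longrightarrow> F x s p M1 \<le> F x s p M2)"

definition usc_env :: "'a::topological_space set \<Rightarrow> ('a \<Rightarrow> real) \<Rightarrow> 'a \<Rightarrow> ereal" where
  "usc_env C z x = Limsup (inf (nhds x) (principal C)) (\<lambda>y. ereal (z y))"

definition lsc_env :: "'a::topological_space set \<Rightarrow> ('a \<Rightarrow> real) \<Rightarrow> 'a \<Rightarrow> ereal" where
  "lsc_env C z x = Liminf (inf (nhds x) (principal C)) (\<lambda>y. ereal (z y))"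

definition F_upper :: "(real^'n::finite) set \<Rightarrow> (real^'n \<Rightarrow> real \<Rightarrow> real^'n \<Rightarrow> real^'n^'n \<Rightarrow> real)
    \<Rightarrow> real^'n \<Rightarrow> real \<Rightarrow> real^'n \<Rightarrow> real^'n^'n \<Rightarrow> ereal" where
  "F_upper \<Omega> F x s p M = usc_env (\<Omega> \<times> UNIV \<times> UNIV \<times> Sym) (\<lambda>(y,t,q,N). F y t q N) (x,s,p,M)"

definition F_lower :: "(real^'n::finite) set \<Rightarrow> (real^'n \<Rightarrow> real \<Rightarrow> real^'n \<Rightarrow> real^'n^'n \<Rightarrow> real)
    \<Rightarrow> real^'n \<Rightarrow> real \<Rightarrow> real^'n \<Rightarrow> real^'n^'n \<Rightarrow> ereal" where
  "F_lower \<Omega> F x s p M = lsc_env (\<Omega> \<times> UNIV \<times> UNIV \<times> Sym) (\<lambda>(y,t,q,N). F y t q N) (x,s,p,M)"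

text \<open>Assumptions (a), (b), (c) on the operators A_\<rho> : \<Omega> \<times> X \<times> R \<rightarrow> R.\<close>
definition scheme_assms :: "(real^'n::finite) set \<Rightarrow> (real^'n \<Rightarrow> real) set
    \<Rightarrow> (real \<Rightarrow> real^'n \<Rightarrow> (real^'n \<Rightarrow> real) \<Rightarrow> real \<Rightarrow> real) \<Rightarrow> bool" where
  "scheme_assms \<Omega> X A =
    (\<forall>\<rho>>0. \<forall>x\<in>\<Omega>.
      (\<forall>\<phi>1\<in>X. \<forall>\<phi>2\<in>X. \<forall>s. \<phi>1 \<le> \<phi>2 \<longrightarrow> A \<rho> x \<phi>2 s \<le> A \<rho> x \<phi>1 s) \<and>
      (\<forall>\<phi>\<in>X. \<forall>s1 s2. s1 \<le> s2 \<longrightarrow> A \<rho> x \<phi> s1 \<le> A \<rho> x \<phi> s2) \<and>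
      (\<forall>\<phi>\<in>X. \<exists>!s. A \<rho> x \<phi> s = 0))"

definition dpp_supersol where
  "dpp_supersol \<Omega> X A g \<rho> (u :: real^'n::finite \<Rightarrow> real) =
    (u \<in> Xbar \<and> (\<forall>x. x \<notin> \<Omega> \<longrightarrow> u x \<ge> g x) \<and>
     (\<forall>x\<in>\<Omega>. \<forall>\<phi>\<in>X. \<phi> \<le> u \<longrightarrow> A \<rho> x \<phi> (u x) \<ge> 0))"

definition dpp_subsol where
  "dpp_subsol \<Omega> X A g \<rho> (u :: real^'n::finite \<Rightarrow> real) =
    (u \<in> Xbar \<and> (\<forall>x. x \<notin> \<Omega> \<longrightarrow> u x \<le> g x) \<and>
     (\<forall>x\<in>\<Omega>. \<forall>\<phi>\<in>X. \<phi> \<ge> u \<longrightarrow> A \<rho> x \<phi> (u x) \<le> 0))"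

definition dpp_sol where
  "dpp_sol \<Omega> X A g \<rho> u = (dpp_supersol \<Omega> X A g \<rho> u \<and> dpp_subsol \<Omega> X A g \<rho> u)"

definition B_op where
  "B_op \<Omega> A (g :: real^'n::finite \<Rightarrow> real) \<rho> x \<phi> s = (if x \<in> \<Omega> then A \<rho> x \<phi> s else s - g x)"

definition positive_modulus :: "(real \<Rightarrow> real) \<Rightarrow> bool" where
  "positive_modulus \<omega> = (continuous_on {0..} \<omega> \<and> strict_mono_on {0..} \<omega> \<and> \<omega> 0 = 0)"

definition consistent where
  "consistent \<Omega> A (g :: real^'n::finite \<Rightarrow> real) F =
    (\<forall>x\<in>closure \<Omega>. \<forall>\<phi>\<in>Cb_inf. \<exists>\<omega>. positive_modulus \<omega> \<and>
      Limsup (at_right 0 \<times>\<^sub>F nhds x \<times>\<^sub>F nhds 0)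
        (\<lambda>(\<rho>,y,\<xi>). ereal (B_op \<Omega> A g \<rho> y (\<lambda>z. \<phi> z + \<xi>) (\<phi> y + \<xi> + \<omega> \<rho>)))
      \<le> (if x \<in> \<Omega> then F_upper \<Omega> F x (\<phi> x) (grad \<phi> x) (hess \<phi> x)
          else max (ereal (\<phi> x) - lsc_env UNIV g x) (F_upper \<Omega> F x (\<phi> x) (grad \<phi> x) (hess \<phi> x)))
    \<and>
      Liminf (at_right 0 \<times>\<^sub>F nhds x \<times>\<^sub>F nhds 0)
        (\<lambda>(\<rho>,y,\<xi>). ereal (B_op \<Omega> A g \<rho> y (\<lambda>z. \<phi> z + \<xi>) (\<phi> y + \<xi> - \<omega> \<rho>)))
      \<ge> (if x \<in> \<Omega> then F_lower \<Omega> F x (\<phi> x) (grad \<phi> x) (hess \<phi> x)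
          else min (ereal (\<phi> x) - usc_env UNIV g x) (F_lower \<Omega> F x (\<phi> x) (grad \<phi> x) (hess \<phi> x))))"

text \<open>Upper/lower envelopes of u relative to the closure of \<Omega> (finite for bounded u).\<close>
definition ustar :: "(real^'n::finite) set \<Rightarrow> (real^'n \<Rightarrow> real) \<Rightarrow> real^'n \<Rightarrow> real" where
  "ustar \<Omega> u x = real_of_ereal (usc_env (closure \<Omega>) u x)"

definition lstar :: "(real^'n::finite) set \<Rightarrow> (real^'n \<Rightarrow> real) \<Rightarrow> real^'n \<Rightarrow> real" where
  "lstar \<Omega> u x = real_of_ereal (lsc_env (closure \<Omega>) u x)"

definition pde_subsol where
  "pde_subsol \<Omega> F (g :: real^'n::finite \<Rightarrow> real) u =
    (u \<in> Xbar \<and> (\<forall>\<phi>\<in>Cb_inf. \<forall>x\<in>closure \<Omega>.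
      (\<forall>y\<in>closure \<Omega>. ustar \<Omega> u y - \<phi> y \<le> ustar \<Omega> u x - \<phi> x) \<longrightarrow>
      (if x \<in> \<Omega> then F_lower \<Omega> F x (ustar \<Omega> u x) (grad \<phi> x) (hess \<phi> x) \<le> 0
       else min (ereal (ustar \<Omega> u x) - usc_env UNIV g x)
                (F_lower \<Omega> F x (ustar \<Omega> u x) (grad \<phi> x) (hess \<phi> x)) \<le> 0)))"

definition pde_supersol where
  "pde_supersol \<Omega> F (g :: real^'n::finite \<Rightarrow> real) u =
    (u \<in> Xbar \<and> (\<forall>\<phi>\<in>Cb_inf. \<forall>x\<in>closure \<Omega>.
      (\<forall>y\<in>closure \<Omega>. lstar \<Omega> u y - \<phi> y \<ge> lstar \<Omega> u x - \<phi> x) \<longrightarrow>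
      (if x \<in> \<Omega> then F_upper \<Omega> F x (lstar \<Omega> u x) (grad \<phi> x) (hess \<phi> x) \<ge> 0
       else max (ereal (lstar \<Omega> u x) - lsc_env UNIV g x)
                (F_upper \<Omega> F x (lstar \<Omega> u x) (grad \<phi> x) (hess \<phi> x)) \<ge> 0)))"

definition pde_sol where
  "pde_sol \<Omega> F g u = (pde_subsol \<Omega> F g u \<and> pde_supersol \<Omega> F g u)"

definition usc_on :: "'a::metric_space set \<Rightarrow> ('a \<Rightarrow> real) \<Rightarrow> bool" where
  "usc_on S u = (\<forall>x\<in>S. \<forall>e>0. \<exists>d>0. \<forall>y\<in>S. dist y x < d \<longrightarrow> u y < u x + e)"

definition lsc_on :: "'a::metric_space set \<Rightarrow> ('a \<Rightarrow> real) \<Rightarrow> bool" where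
  "lsc_on S u = (\<forall>x\<in>S. \<forall>e>0. \<exists>d>0. \<forall>y\<in>S. dist y x < d \<longrightarrow> u y > u x - e)"

definition strong_uniqueness where
  "strong_uniqueness \<Omega> F g =
    (\<forall>u v. pde_subsol \<Omega> F g u \<and> usc_on (closure \<Omega>) u \<and>
           pde_supersol \<Omega> F g v \<and> lsc_on (closure \<Omega>) v \<longrightarrow> (\<forall>x\<in>closure \<Omega>. u x \<le> v x))"

end

theory Submission
  imports Defs "HOL-Computational_Algebra.Polynomial"
begin

text \<open>The Barles--Souganidis argument. The half-relaxed limits \<open>U = limsup* u\<^sub>\<rho>\<close> and
  \<open>L = liminf* u\<^sub>\<rho>\<close> are a bounded upper semicontinuous subsolution and a lower
  semicontinuous supersolution. If \<open>U - \<phi>\<close> has a maximum at \<open>x\<^sub>0\<close>, adding a penalty that is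
  flat to second order at \<open>x\<^sub>0\<close> makes the maximum strict; then for arbitrarily small \<open>\<rho>\<close> the
  supremum of \<open>u\<^sub>\<rho> - \<phi>\<close> is attained up to \<open>\<omega>(\<rho>)\<close> at points close to \<open>x\<^sub>0\<close>, and the
  monotonicity of the scheme turns the dynamic programming principle there into the sign of
  \<open>B\<^sub>\<rho>\<close> that consistency converts into the viscosity inequality. At boundary points where the
  boundary inequality does not hold trivially, \<open>u\<^sub>\<rho> = g\<close> stays strictly below the test function
  outside \<open>\<Omega>\<close>. Strong uniqueness gives \<open>U \<le> L\<close> on \<open>closure \<Omega>\<close>, so \<open>U = L\<close> is the unique
  solution, and equality of the half-relaxed limits is locally uniform convergence.\<close>

section \<open>Limits as \<open>\<rho> \<rightarrow> 0\<^sup>+\<close> and \<open>y \<rightarrow> x\<close>\<close>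

lemma eventually_at_right_prod_nhds_iff:
  "eventually P (at_right (0::real) \<times>\<^sub>F nhds (x::'a::metric_space)) \<longleftrightarrow>
   (\<exists>d>0. \<exists>e>0. \<forall>\<rho> y. 0 < \<rho> \<longrightarrow> \<rho> < d \<longrightarrow> dist y x < e \<longrightarrow> P (\<rho>, y))"
proof
  assume "eventually P (at_right 0 \<times>\<^sub>F nhds x)"
  then obtain Pf Pg where "eventually Pf (at_right 0)" "eventually Pg (nhds x)"
    "\<forall>\<rho> y. Pf \<rho> \<longrightarrow> Pg y \<longrightarrow> P (\<rho>, y)"
    unfolding eventually_prod_filter by blast
  then show "\<exists>d>0. \<exists>e>0. \<forall>\<rho> y. 0 < \<rho> \<longrightarrow> \<rho> < d \<longrightarrow> dist y x < e \<longrightarrow> P (\<rho>, y)"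
    unfolding eventually_at_right_field eventually_nhds_metric by (metis dist_commute)
next
  assume "\<exists>d>0. \<exists>e>0. \<forall>\<rho> y. 0 < \<rho> \<longrightarrow> \<rho> < d \<longrightarrow> dist y x < e \<longrightarrow> P (\<rho>, y)"
  then obtain d e where "d > 0" "e > 0" and box: "\<forall>\<rho> y. 0 < \<rho> \<longrightarrow> \<rho> < d \<longrightarrow> dist y x < e \<longrightarrow> P (\<rho>, y)"
    by blast
  then have "eventually (\<lambda>\<rho>. 0 < \<rho> \<and> \<rho> < d) (at_right (0::real))"
    and "eventually (\<lambda>y. dist y x < e) (nhds x)"
    unfolding eventually_at_right_field eventually_nhds_metric by (auto simp: dist_commute)
  from eventually_prodI[OF this] show "eventually P (at_right 0 \<times>\<^sub>F nhds x)"
    by (rule eventually_mono) (use box in auto)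
qed

lemma eventually_at_right_prod_nhds_nhds_iff:
  "eventually P (at_right (0::real) \<times>\<^sub>F nhds (x::'a::metric_space) \<times>\<^sub>F nhds (0::real)) \<longleftrightarrow>
   (\<exists>d>0. \<exists>e>0. \<exists>e'>0. \<forall>\<rho> y \<xi>. 0 < \<rho> \<longrightarrow> \<rho> < d \<longrightarrow> dist y x < e \<longrightarrow> \<bar>\<xi>\<bar> < e' \<longrightarrow> P (\<rho>, y, \<xi>))"
proof
  assume "eventually P (at_right 0 \<times>\<^sub>F nhds x \<times>\<^sub>F nhds 0)"
  then obtain Pf Q where "eventually Pf (at_right 0)" "eventually Q (nhds x \<times>\<^sub>F nhds 0)"
    "\<forall>\<rho> q. Pf \<rho> \<longrightarrow> Q q \<longrightarrow> P (\<rho>, q)"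
    unfolding eventually_prod_filter by blast
  moreover from this(2) obtain Pg Ph where "eventually Pg (nhds x)" "eventually Ph (nhds 0)"
    "\<forall>y \<xi>. Pg y \<longrightarrow> Ph \<xi> \<longrightarrow> Q (y, \<xi>)"
    unfolding eventually_prod_filter by blast
  ultimately show "\<exists>d>0. \<exists>e>0. \<exists>e'>0. \<forall>\<rho> y \<xi>. 0 < \<rho> \<longrightarrow> \<rho> < d \<longrightarrow> dist y x < e \<longrightarrow> \<bar>\<xi>\<bar> < e' \<longrightarrow> P (\<rho>, y, \<xi>)"
    unfolding eventually_at_right_field eventually_nhds_metric
    by (metis dist_commute dist_real_def diff_0_right)
next
  assume "\<exists>d>0. \<exists>e>0. \<exists>e'>0. \<forall>\<rho> y \<xi>. 0 < \<rho> \<longrightarrow> \<rho> < d \<longrightarrow> dist y x < e \<longrightarrow> \<bar>\<xi>\<bar> < e' \<longrightarrow> P (\<rho>, y, \<xi>)"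
  then obtain d e e' where "d > 0" "e > 0" "e' > 0"
    and box: "\<forall>\<rho> y \<xi>. 0 < \<rho> \<longrightarrow> \<rho> < d \<longrightarrow> dist y x < e \<longrightarrow> \<bar>\<xi>\<bar> < e' \<longrightarrow> P (\<rho>, y, \<xi>)"
    by blast
  then have "eventually (\<lambda>\<rho>. 0 < \<rho> \<and> \<rho> < d) (at_right (0::real))"
    and "eventually (\<lambda>y. dist y x < e) (nhds x)" and "eventually (\<lambda>\<xi>. \<bar>\<xi>\<bar> < e') (nhds (0::real))"
    unfolding eventually_at_right_field eventually_nhds_metric by (auto simp: dist_commute dist_real_def)
  from eventually_prodI[OF this(1) eventually_prodI[OF this(2,3)]]
  show "eventually P (at_right 0 \<times>\<^sub>F nhds x \<times>\<^sub>F nhds 0)"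
    by (rule eventually_mono) (use box in auto)
qed

lemma frequently_at_right_prod_nhds_nhds_iff:
  "frequently P (at_right (0::real) \<times>\<^sub>F nhds (x::'a::metric_space) \<times>\<^sub>F nhds (0::real)) \<longleftrightarrow>
   (\<forall>d>0. \<forall>e>0. \<forall>e'>0. \<exists>\<rho> y \<xi>. 0 < \<rho> \<and> \<rho> < d \<and> dist y x < e \<and> \<bar>\<xi>\<bar> < e' \<and> P (\<rho>, y, \<xi>))"
  by (auto simp: frequently_def eventually_at_right_prod_nhds_nhds_iff)

lemma frequently_at_right_prod_nhds_nhds_uminus:
  assumes "frequently P (at_right (0::real) \<times>\<^sub>F nhds (x::'a::metric_space) \<times>\<^sub>F nhds (0::real))"
  shows "frequently (\<lambda>(\<rho>, y, \<xi>). P (\<rho>, y, - \<xi>)) (at_right 0 \<times>\<^sub>F nhds x \<times>\<^sub>F nhds 0)"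
  unfolding frequently_at_right_prod_nhds_nhds_iff
proof (intro allI impI)
  fix d e e' :: real assume "d > 0" "e > 0" "e' > 0"
  with assms obtain \<rho> y \<xi> where "0 < \<rho> \<and> \<rho> < d \<and> dist y x < e \<and> \<bar>\<xi>\<bar> < e' \<and> P (\<rho>, y, \<xi>)"
    unfolding frequently_at_right_prod_nhds_nhds_iff by blast
  then show "\<exists>\<rho> y \<xi>'. 0 < \<rho> \<and> \<rho> < d \<and> dist y x < e \<and> \<bar>\<xi>'\<bar> < e' \<and> (\<lambda>(\<rho>, y, \<xi>). P (\<rho>, y, - \<xi>)) (\<rho>, y, \<xi>')"
    by (intro exI[of _ \<rho>] exI[of _ y] exI[of _ "- \<xi>"]) simp
qed

lemma Liminf_le_of_frequently:
  assumes "frequently (\<lambda>x. f x \<le> c) F"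
  shows "Liminf F f \<le> (c::'a::complete_linorder)"
proof (rule ccontr)
  assume "\<not> Liminf F f \<le> c"
  then have "eventually (\<lambda>x. \<not> f x \<le> c) F"
    by (auto simp: not_le elim: eventually_mono dest: less_LiminfD)
  with assms show False
    unfolding frequently_def by blast
qed

lemma Limsup_ge_of_frequently:
  assumes "frequently (\<lambda>x. c \<le> f x) F"
  shows "c \<le> Limsup F (f::_ \<Rightarrow> 'a::complete_linorder)"
proof (rule ccontr)
  assume "\<not> c \<le> Limsup F f"
  then have "eventually (\<lambda>x. \<not> c \<le> f x) F"
    by (auto simp: not_le elim: eventually_mono dest: Limsup_lessD)
  with assms show False
    unfolding frequently_def by blast
qed

lemma eventually_ball_compact:
  fixes S :: "'a::topological_space set"
  assumes "compact S" and ev: "\<forall>x\<in>S. eventually (\<lambda>(t, y). P t y) (F \<times>\<^sub>F nhds x)"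
  shows "eventually (\<lambda>t. \<forall>y\<in>S. P t y) F"
proof -
  have "\<forall>x\<in>S. \<exists>Pf T. eventually Pf F \<and> open T \<and> x \<in> T \<and> (\<forall>t y. Pf t \<longrightarrow> y \<in> T \<longrightarrow> P t y)"
  proof
    fix x assume "x \<in> S"
    with ev obtain Pf Pg where "eventually Pf F" "eventually Pg (nhds x)" "\<forall>t y. Pf t \<longrightarrow> Pg y \<longrightarrow> P t y"
      unfolding eventually_prod_filter by auto
    then show "\<exists>Pf T. eventually Pf F \<and> open T \<and> x \<in> T \<and> (\<forall>t y. Pf t \<longrightarrow> y \<in> T \<longrightarrow> P t y)"
      unfolding eventually_nhds by blast
  qed
  then obtain Pf T where PfT: "\<And>x. x \<in> S \<Longrightarrow> eventually (Pf x) F \<and> open (T x) \<and> x \<in> T x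
      \<and> (\<forall>t y. Pf x t \<longrightarrow> y \<in> T x \<longrightarrow> P t y)"
    by metis
  obtain S' where S': "S' \<subseteq> S" "finite S'" "S \<subseteq> (\<Union>x\<in>S'. T x)"
    by (rule compactE_image[OF \<open>compact S\<close>, of S T]) (use PfT in blast)+
  from S'(1,2) have "eventually (\<lambda>t. \<forall>x\<in>S'. Pf x t) F"
    using PfT by (intro eventually_ball_finite) auto
  then show ?thesis
  proof (rule eventually_mono)
    fix t assume t: "\<forall>x\<in>S'. Pf x t"
    show "\<forall>y\<in>S. P t y"
    proof
      fix y assume "y \<in> S"
      then obtain x where "x \<in> S'" "y \<in> T x"
        using S'(3) by blast
      with PfT S'(1) t show "P t y"
        by blast
    qed
  qed
qed

lemma isCont_eventually_greater: "isCont f x \<Longrightarrow> 0 < \<epsilon> \<Longrightarrow> eventually (\<lambda>y. f x - \<epsilon> < (f y::real)) (nhds x)"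
  using order_tendstoD(1)[of f "f x" "at x" "f x - \<epsilon>"] by (simp add: isCont_def eventually_nhds_conv_at)

lemma isCont_eventually_less: "isCont f x \<Longrightarrow> 0 < \<epsilon> \<Longrightarrow> eventually (\<lambda>y. (f y::real) < f x + \<epsilon>) (nhds x)"
  using order_tendstoD(2)[of f "f x" "at x" "f x + \<epsilon>"] by (simp add: isCont_def eventually_nhds_conv_at)

lemma lsc_on_iff_usc_on_uminus: "lsc_on S f \<longleftrightarrow> usc_on S (\<lambda>y. - f y)"
proof -
  have "\<And>a b e::real. (b - e < a) = (- a < - b + e)" by auto
  then show ?thesis unfolding lsc_on_def usc_on_def by simp
qed

section \<open>Half-relaxed limits\<close>

text \<open>The half-relaxed limits \<open>limsup*\<close> and \<open>liminf*\<close> of Barles and Perthame. For a bounded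
  family they are finite, so taking \<open>real_of_ereal\<close> loses nothing.\<close>

definition upper_relaxed_limit :: "(real \<Rightarrow> 'a::topological_space \<Rightarrow> real) \<Rightarrow> 'a \<Rightarrow> real" where
  "upper_relaxed_limit u x = real_of_ereal (Limsup (at_right 0 \<times>\<^sub>F nhds x) (\<lambda>(\<rho>, y). ereal (u \<rho> y)))"

definition lower_relaxed_limit :: "(real \<Rightarrow> 'a::topological_space \<Rightarrow> real) \<Rightarrow> 'a \<Rightarrow> real" where
  "lower_relaxed_limit u x = real_of_ereal (Liminf (at_right 0 \<times>\<^sub>F nhds x) (\<lambda>(\<rho>, y). ereal (u \<rho> y)))"

lemma at_right_prod_nhds_neq_bot: "at_right (0::real) \<times>\<^sub>F nhds x \<noteq> bot"
  by (simp add: prod_filter_eq_bot)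

lemma eventually_at_right_prod_nhds_pos: "eventually (\<lambda>(\<rho>, y). 0 < \<rho>) (at_right (0::real) \<times>\<^sub>F nhds x)"
  using eventually_prod1[OF nhds_neq_bot, of "(<) 0" "at_right (0::real)" x] eventually_at_right_less
  by (simp add: case_prod_beta)

lemma eventually_at_right_prod_nhds_snd:
  "eventually P (nhds x) \<Longrightarrow> eventually (\<lambda>(\<rho>, y). P y) (at_right (0::real) \<times>\<^sub>F nhds x)"
  by (simp add: eventually_prod2 trivial_limit_at_right_real)

lemma
  fixes u :: "real \<Rightarrow> 'a::topological_space \<Rightarrow> real"
  assumes bnd: "\<forall>\<rho>>0. \<forall>y. \<bar>u \<rho> y\<bar> \<le> M"
  shows Limsup_eq_upper_relaxed_limit:
      "Limsup (at_right 0 \<times>\<^sub>F nhds x) (\<lambda>(\<rho>, y). ereal (u \<rho> y)) = ereal (upper_relaxed_limit u x)"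
    and abs_upper_relaxed_limit_le: "\<bar>upper_relaxed_limit u x\<bar> \<le> M"
proof -
  let ?L = "Limsup (at_right 0 \<times>\<^sub>F nhds x) (\<lambda>(\<rho>, y). ereal (u \<rho> y))"
  have "- M \<le> u \<rho> y \<and> u \<rho> y \<le> M" if "0 < \<rho>" for \<rho> y
    using bnd that abs_le_D1[of "u \<rho> y" M] abs_le_D2[of "u \<rho> y" M] by force
  then have ev: "eventually (\<lambda>(\<rho>, y). - M \<le> u \<rho> y \<and> u \<rho> y \<le> M) (at_right 0 \<times>\<^sub>F nhds x)"
    by (auto intro: eventually_mono[OF eventually_at_right_prod_nhds_pos])
  have "?L \<le> ereal M"
    by (rule Limsup_bounded) (rule eventually_mono[OF ev], auto)
  moreover have "ereal (- M) \<le> ?L"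
    by (rule le_Limsup[OF at_right_prod_nhds_neq_bot]) (rule eventually_mono[OF ev], auto)
  ultimately show "?L = ereal (upper_relaxed_limit u x)" and "\<bar>upper_relaxed_limit u x\<bar> \<le> M"
    unfolding upper_relaxed_limit_def by (cases ?L; auto)+
qed

lemma Liminf_eq_uminus_Limsup_uminus:
  "Liminf F (\<lambda>(\<rho>, y). ereal (u \<rho> y)) = - Limsup F (\<lambda>(\<rho>, y). ereal (- u \<rho> y))"
proof -
  have "(\<lambda>(\<rho>, y). ereal (u \<rho> y)) = (\<lambda>p. - (\<lambda>(\<rho>, y). ereal (- u \<rho> y)) p)"
    by auto
  then show ?thesis
    by (simp only: ereal_Liminf_uminus)
qed

lemma lower_relaxed_limit_eq_uminus:
  "lower_relaxed_limit u x = - upper_relaxed_limit (\<lambda>\<rho> y. - u \<rho> y) x"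
  unfolding lower_relaxed_limit_def upper_relaxed_limit_def Liminf_eq_uminus_Limsup_uminus
  by (simp only: real_of_ereal)

lemma eventually_less_upper_relaxed_limit:
  assumes "\<forall>\<rho>>0. \<forall>y. \<bar>u \<rho> y\<bar> \<le> M" and "0 < \<epsilon>"
  shows "eventually (\<lambda>(\<rho>, y). u \<rho> y < upper_relaxed_limit u x + \<epsilon>) (at_right 0 \<times>\<^sub>F nhds x)"
proof -
  have "Limsup (at_right 0 \<times>\<^sub>F nhds x) (\<lambda>(\<rho>, y). ereal (u \<rho> y)) < ereal (upper_relaxed_limit u x + \<epsilon>)"
    using Limsup_eq_upper_relaxed_limit[OF assms(1)] \<open>0 < \<epsilon>\<close> by simp
  from Limsup_lessD[OF this] show ?thesis
    by (rule eventually_mono) auto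
qed

lemma frequently_greater_upper_relaxed_limit:
  assumes "\<forall>\<rho>>0. \<forall>y. \<bar>u \<rho> y\<bar> \<le> M" and "0 < \<tau>"
  shows "frequently (\<lambda>(\<rho>, y). upper_relaxed_limit u x - \<tau> < u \<rho> y) (at_right 0 \<times>\<^sub>F nhds x)"
proof (rule ccontr)
  assume "\<not> ?thesis"
  then have "Limsup (at_right 0 \<times>\<^sub>F nhds x) (\<lambda>(\<rho>, y). ereal (u \<rho> y)) \<le> ereal (upper_relaxed_limit u x - \<tau>)"
    unfolding not_frequently by (intro Limsup_bounded) (auto simp: case_prod_beta not_less elim: eventually_mono)
  then show False
    using Limsup_eq_upper_relaxed_limit[OF assms(1)] \<open>0 < \<tau>\<close> by simp
qed

lemma eventually_less_of_upper_relaxed_limit_le: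
  fixes u :: "real \<Rightarrow> 'a::metric_space \<Rightarrow> real"
  assumes bnd: "\<forall>\<rho>>0. \<forall>y. \<bar>u \<rho> y\<bar> \<le> M" and "isCont \<Phi> z"
    and "upper_relaxed_limit u z \<le> \<Phi> z" and "0 < \<epsilon>"
  shows "eventually (\<lambda>(\<rho>, y). u \<rho> y < \<Phi> y + \<epsilon>) (at_right 0 \<times>\<^sub>F nhds z)"
proof -
  have "eventually (\<lambda>y. \<Phi> z - \<epsilon>/2 < \<Phi> y) (nhds z)"
    using isCont_eventually_greater[OF \<open>isCont \<Phi> z\<close>, of "\<epsilon>/2"] \<open>0 < \<epsilon>\<close> by simp
  then have "eventually (\<lambda>(\<rho>, y). \<Phi> z - \<epsilon>/2 < \<Phi> y) (at_right (0::real) \<times>\<^sub>F nhds z)"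
    by (rule eventually_at_right_prod_nhds_snd)
  moreover have "eventually (\<lambda>(\<rho>, y). u \<rho> y < upper_relaxed_limit u z + \<epsilon>/2) (at_right 0 \<times>\<^sub>F nhds z)"
    using eventually_less_upper_relaxed_limit[OF bnd] \<open>0 < \<epsilon>\<close> by simp
  ultimately show ?thesis
    by eventually_elim (use \<open>upper_relaxed_limit u z \<le> \<Phi> z\<close> in auto)
qed

lemma frequently_close_of_upper_relaxed_limit_eq:
  assumes bnd: "\<forall>\<rho>>0. \<forall>y. \<bar>u \<rho> y\<bar> \<le> M" and "isCont \<phi> x0"
    and "upper_relaxed_limit u x0 = \<phi> x0" and "0 < \<tau>"
  shows "frequently (\<lambda>(\<rho>, y). - \<tau> < u \<rho> y - \<phi> y) (at_right 0 \<times>\<^sub>F nhds x0)"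
proof -
  have "eventually (\<lambda>y. \<phi> y < \<phi> x0 + \<tau>/2) (nhds x0)"
    using isCont_eventually_less[OF \<open>isCont \<phi> x0\<close>] \<open>0 < \<tau>\<close> by simp
  then have "eventually (\<lambda>(\<rho>, y). \<phi> y < \<phi> x0 + \<tau>/2) (at_right (0::real) \<times>\<^sub>F nhds x0)"
    by (rule eventually_at_right_prod_nhds_snd)
  with frequently_greater_upper_relaxed_limit[OF bnd, of "\<tau>/2" x0] \<open>0 < \<tau>\<close>
  have "frequently (\<lambda>p. (\<lambda>(\<rho>, y). \<phi> y < \<phi> x0 + \<tau>/2) p \<and> (\<lambda>(\<rho>, y). \<phi> x0 - \<tau>/2 < u \<rho> y) p)
      (at_right 0 \<times>\<^sub>F nhds x0)"
    using \<open>upper_relaxed_limit u x0 = \<phi> x0\<close> by (auto intro: frequently_eventually_conj)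
  then show ?thesis
    by (rule frequently_elim1) auto
qed

lemma upper_relaxed_limit_usc_on:
  fixes u :: "real \<Rightarrow> 'a::metric_space \<Rightarrow> real"
  assumes bnd: "\<forall>\<rho>>0. \<forall>y. \<bar>u \<rho> y\<bar> \<le> M"
  shows "usc_on S (upper_relaxed_limit u)"
  unfolding usc_on_def
proof (intro ballI allI impI)
  fix x \<epsilon> assume "x \<in> S" "(0::real) < \<epsilon>"
  let ?U = "upper_relaxed_limit u"
  obtain d e where "0 < d" "0 < e" and box: "\<forall>\<rho> y. 0 < \<rho> \<longrightarrow> \<rho> < d \<longrightarrow> dist y x < e \<longrightarrow> u \<rho> y < ?U x + \<epsilon>/2"
    using eventually_less_upper_relaxed_limit[OF bnd, of "\<epsilon>/2" x] \<open>0 < \<epsilon>\<close>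
    unfolding eventually_at_right_prod_nhds_iff by auto
  have "?U z < ?U x + \<epsilon>" if "dist z x < e" for z
  proof -
    have "u \<rho> y \<le> ?U x + \<epsilon>/2" if "0 < \<rho>" "\<rho> < d" "dist y z < e - dist z x" for \<rho> y
      using box dist_triangle[of y x z] that by (simp add: less_imp_le)
    then have "eventually (\<lambda>(\<rho>, y). u \<rho> y \<le> ?U x + \<epsilon>/2) (at_right 0 \<times>\<^sub>F nhds z)"
      unfolding eventually_at_right_prod_nhds_iff using \<open>0 < d\<close> \<open>dist z x < e\<close>
      by (intro exI[of _ d] conjI exI[of _ "e - dist z x"]) auto
    then have "Limsup (at_right 0 \<times>\<^sub>F nhds z) (\<lambda>(\<rho>, y). ereal (u \<rho> y)) \<le> ereal (?U x + \<epsilon>/2)"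
      by (intro Limsup_bounded) (auto simp: case_prod_beta elim: eventually_mono)
    then show ?thesis
      using Limsup_eq_upper_relaxed_limit[OF bnd] \<open>0 < \<epsilon>\<close> by simp
  qed
  with \<open>0 < e\<close> show "\<exists>d>0. \<forall>y\<in>S. dist y x < d \<longrightarrow> ?U y < ?U x + \<epsilon>"
    by blast
qed

lemma lower_relaxed_limit_lsc_on:
  fixes u :: "real \<Rightarrow> 'a::metric_space \<Rightarrow> real"
  assumes "\<forall>\<rho>>0. \<forall>y. \<bar>u \<rho> y\<bar> \<le> M"
  shows "lsc_on S (lower_relaxed_limit u)"
  unfolding lsc_on_iff_usc_on_uminus lower_relaxed_limit_eq_uminus
  using assms by (simp add: upper_relaxed_limit_usc_on[of _ M])

lemma lower_relaxed_limit_le_upper: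
  assumes bnd: "\<forall>\<rho>>0. \<forall>y. \<bar>u \<rho> y\<bar> \<le> M"
  shows "lower_relaxed_limit u x \<le> upper_relaxed_limit u x"
proof -
  let ?F = "at_right 0 \<times>\<^sub>F nhds x"
  have "ereal (lower_relaxed_limit u x) = Liminf ?F (\<lambda>(\<rho>, y). ereal (u \<rho> y))"
    using Limsup_eq_upper_relaxed_limit[of "\<lambda>\<rho> y. - u \<rho> y" M x] bnd
    by (simp add: lower_relaxed_limit_eq_uminus Liminf_eq_uminus_Limsup_uminus)
  also have "\<dots> \<le> Limsup ?F (\<lambda>(\<rho>, y). ereal (u \<rho> y))"
    by (rule Liminf_le_Limsup[OF at_right_prod_nhds_neq_bot])
  also have "\<dots> = ereal (upper_relaxed_limit u x)"
    by (rule Limsup_eq_upper_relaxed_limit[OF bnd])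
  finally show ?thesis by simp
qed

lemma upper_relaxed_limit_continuous_on:
  fixes u :: "real \<Rightarrow> 'a::metric_space \<Rightarrow> real"
  assumes bnd: "\<forall>\<rho>>0. \<forall>y. \<bar>u \<rho> y\<bar> \<le> M"
    and eq: "\<And>x. x \<in> K \<Longrightarrow> lower_relaxed_limit u x = upper_relaxed_limit u x"
  shows "continuous_on K (upper_relaxed_limit u)"
  unfolding continuous_on_iff
proof (intro ballI allI impI)
  fix x e assume "x \<in> K" "(0::real) < e"
  let ?U = "upper_relaxed_limit u" and ?L = "lower_relaxed_limit u"
  obtain d1 where "0 < d1" "\<forall>y\<in>K. dist y x < d1 \<longrightarrow> ?U y < ?U x + e"
    using upper_relaxed_limit_usc_on[OF bnd, of K, unfolded usc_on_def, rule_format, OF \<open>x \<in> K\<close> \<open>0 < e\<close>]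
    by blast
  moreover obtain d2 where "0 < d2" "\<forall>y\<in>K. dist y x < d2 \<longrightarrow> ?L x - e < ?L y"
    using lower_relaxed_limit_lsc_on[OF bnd, of K, unfolded lsc_on_def, rule_format, OF \<open>x \<in> K\<close> \<open>0 < e\<close>]
    by blast
  ultimately show "\<exists>d>0. \<forall>y\<in>K. dist y x < d \<longrightarrow> dist (?U y) (?U x) < e"
    using eq \<open>x \<in> K\<close> by (intro exI[of _ "min d1 d2"]) (auto simp: dist_real_def abs_less_iff)
qed

lemma uniform_limit_upper_relaxed_limit:
  fixes u :: "real \<Rightarrow> 'a::metric_space \<Rightarrow> real"
  assumes bnd: "\<forall>\<rho>>0. \<forall>y. \<bar>u \<rho> y\<bar> \<le> M" and "compact K"
    and eq: "\<And>x. x \<in> K \<Longrightarrow> lower_relaxed_limit u x = upper_relaxed_limit u x"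
  shows "uniform_limit K u (upper_relaxed_limit u) (at_right 0)"
  unfolding uniform_limit_iff
proof (intro allI impI)
  fix e :: real assume "0 < e"
  let ?U = "upper_relaxed_limit u"
  have cont: "continuous_on K ?U"
    by (rule upper_relaxed_limit_continuous_on[OF bnd eq])
  have "eventually (\<lambda>(\<rho>, y). y \<in> K \<longrightarrow> dist (u \<rho> y) (?U y) < e) (at_right 0 \<times>\<^sub>F nhds x)"
    if "x \<in> K" for x
  proof -
    have "0 < e/3"
      using \<open>0 < e\<close> by simp
    have "eventually (\<lambda>(\<rho>, y). u \<rho> y < ?U x + e/3) (at_right 0 \<times>\<^sub>F nhds x)"
      using eventually_less_upper_relaxed_limit[OF bnd] \<open>0 < e\<close> by simp
    moreover have "eventually (\<lambda>(\<rho>, y). - u \<rho> y < - ?U x + e/3) (at_right 0 \<times>\<^sub>F nhds x)"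
    proof -
      have "upper_relaxed_limit (\<lambda>\<rho> y. - u \<rho> y) x = - ?U x"
        using eq[OF \<open>x \<in> K\<close>] by (simp add: lower_relaxed_limit_eq_uminus)
      then show ?thesis
        using eventually_less_upper_relaxed_limit[of "\<lambda>\<rho> y. - u \<rho> y" M "e/3" x] bnd \<open>0 < e\<close> by simp
    qed
    moreover obtain d where "0 < d" "\<forall>y\<in>K. dist y x < d \<longrightarrow> dist (?U y) (?U x) < e/3"
      using cont \<open>x \<in> K\<close> \<open>0 < e/3\<close> unfolding continuous_on_iff by blast
    then have "eventually (\<lambda>y. y \<in> K \<longrightarrow> dist (?U y) (?U x) < e/3) (nhds x)"
      unfolding eventually_nhds_metric by blast
    then have "eventually (\<lambda>(\<rho>, y). y \<in> K \<longrightarrow> dist (?U y) (?U x) < e/3) (at_right (0::real) \<times>\<^sub>F nhds x)"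
      by (rule eventually_at_right_prod_nhds_snd)
    ultimately show ?thesis
      unfolding dist_real_def abs_less_iff by eventually_elim clarsimp
  qed
  then have "eventually (\<lambda>\<rho>. \<forall>y\<in>K. y \<in> K \<longrightarrow> dist (u \<rho> y) (?U y) < e) (at_right 0)"
    using \<open>compact K\<close> by (intro eventually_ball_compact) auto
  then show "\<forall>\<^sub>F \<rho> in at_right 0. \<forall>y\<in>K. dist (u \<rho> y) (?U y) < e"
    by simp
qed

section \<open>Semicontinuous envelopes\<close>

lemma usc_env_ge: "x \<in> C \<Longrightarrow> ereal (f x) \<le> usc_env C f x"
  unfolding usc_env_def
proof (rule Limsup_greatest)
  fix P assume "x \<in> C" "eventually P (inf (nhds x) (principal C))"
  then have "P x"
    unfolding eventually_inf_principal by (auto dest: eventually_nhds_x_imp_x)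
  then show "ereal (f x) \<le> Sup ((\<lambda>y. ereal (f y)) ` Collect P)"
    by (auto intro: SUP_upper)
qed

lemma usc_env_le: "\<forall>y. f y \<le> B \<Longrightarrow> usc_env C f x \<le> ereal B"
  unfolding usc_env_def by (rule Limsup_bounded) simp

lemma usc_env_outside_closure:
  fixes x :: "'a::metric_space"
  assumes "x \<notin> closure C"
  shows "usc_env C f x = -\<infinity>"
proof -
  obtain e where "0 < e" "\<forall>y\<in>C. \<not> dist y x < e"
    using assms unfolding closure_approachable by auto
  then have "eventually (\<lambda>y. y \<in> C \<longrightarrow> False) (nhds x)"
    unfolding eventually_nhds_metric by blast
  then have "inf (nhds x) (principal C) = bot"
    unfolding eventually_False[symmetric] eventually_inf_principal .
  then show ?thesis
    unfolding usc_env_def by (simp add: bot_ereal_def)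
qed

lemma usc_env_eq_of_usc_on:
  fixes f :: "'a::metric_space \<Rightarrow> real"
  assumes "usc_on C f" "x \<in> C"
  shows "usc_env C f x = ereal (f x)"
proof (rule antisym)
  show "usc_env C f x \<le> ereal (f x)"
  proof (rule ereal_le_epsilon2)
    fix e :: real assume "0 < e"
    then obtain d where "0 < d" "\<forall>y\<in>C. dist y x < d \<longrightarrow> f y < f x + e"
      using assms unfolding usc_on_def by blast
    then have "eventually (\<lambda>y. y \<in> C \<longrightarrow> ereal (f y) \<le> ereal (f x) + ereal e) (nhds x)"
      unfolding eventually_nhds_metric by (auto simp: dist_commute less_imp_le)
    then show "usc_env C f x \<le> ereal (f x) + ereal e"
      unfolding usc_env_def by (intro Limsup_bounded) (simp add: eventually_inf_principal)
  qed
  show "ereal (f x) \<le> usc_env C f x"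
    using assms(2) by (rule usc_env_ge)
qed

lemma usc_env_eq_real:
  assumes "\<forall>y. \<bar>f y\<bar> \<le> B" "x \<in> C"
  shows "usc_env C f x = ereal (real_of_ereal (usc_env C f x))"
    and "f x \<le> real_of_ereal (usc_env C f x)" and "\<bar>real_of_ereal (usc_env C f x)\<bar> \<le> B"
proof -
  have "usc_env C f x \<le> ereal B"
    using assms(1) by (intro usc_env_le) (simp add: abs_le_iff)
  moreover have "ereal (f x) \<le> usc_env C f x"
    using assms(2) by (rule usc_env_ge)
  moreover have "- B \<le> f x"
    using assms(1)[rule_format, of x] unfolding abs_le_iff by linarith
  ultimately show "usc_env C f x = ereal (real_of_ereal (usc_env C f x))"
    and "f x \<le> real_of_ereal (usc_env C f x)" and "\<bar>real_of_ereal (usc_env C f x)\<bar> \<le> B"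
    by (cases "usc_env C f x"; auto)+
qed

lemma usc_on_usc_env:
  fixes f :: "'a::metric_space \<Rightarrow> real"
  assumes bnd: "\<forall>y. \<bar>f y\<bar> \<le> B"
  shows "usc_on C (\<lambda>x. real_of_ereal (usc_env C f x))"
  unfolding usc_on_def
proof (intro ballI allI impI)
  fix x e assume "x \<in> C" "(0::real) < e"
  let ?U = "\<lambda>x. real_of_ereal (usc_env C f x)"
  obtain r where "usc_env C f x = ereal r"
    using usc_env_eq_real(1)[OF bnd \<open>x \<in> C\<close>] by blast
  then have "usc_env C f x < ereal (?U x + e/2)"
    using \<open>0 < e\<close> by simp
  then have "eventually (\<lambda>y. f y < ?U x + e/2) (inf (nhds x) (principal C))"
    unfolding usc_env_def by (auto dest: Limsup_lessD)
  then obtain d where "0 < d" and d: "\<forall>y. dist y x < d \<longrightarrow> y \<in> C \<longrightarrow> f y < ?U x + e/2"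
    unfolding eventually_inf_principal eventually_nhds_metric by blast
  have "?U z < ?U x + e" if "z \<in> C" "dist z x < d" for z
  proof -
    have "eventually (\<lambda>y. y \<in> C \<longrightarrow> ereal (f y) \<le> ereal (?U x + e/2)) (nhds z)"
      unfolding eventually_nhds_metric
    proof (intro exI[of _ "d - dist z x"] conjI allI impI)
      fix y assume "dist y z < d - dist z x" "y \<in> C"
      then show "ereal (f y) \<le> ereal (?U x + e/2)"
        using d dist_triangle[of y x z] by (simp add: less_imp_le)
    qed (use that in auto)
    then have "usc_env C f z \<le> ereal (?U x + e/2)"
      unfolding usc_env_def by (intro Limsup_bounded) (simp add: eventually_inf_principal)
    moreover obtain r' where "usc_env C f z = ereal r'"
      using usc_env_eq_real(1)[OF bnd \<open>z \<in> C\<close>] by blast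
    ultimately show ?thesis
      using \<open>0 < e\<close> by simp
  qed
  with \<open>0 < d\<close> show "\<exists>d>0. \<forall>y\<in>C. dist y x < d \<longrightarrow> ?U y < ?U x + e"
    by blast
qed

lemma lsc_env_uminus: "lsc_env C f x = - usc_env C (\<lambda>y. - f y) x"
proof -
  have "lsc_env C f x = Liminf (inf (nhds x) (principal C)) (\<lambda>y. - ereal (- f y))"
    unfolding lsc_env_def by simp
  also have "\<dots> = - usc_env C (\<lambda>y. - f y) x"
    unfolding usc_env_def by (rule ereal_Liminf_uminus)
  finally show ?thesis .
qed

lemma lstar_eq_uminus_ustar: "lstar \<Omega> w x = - ustar \<Omega> (\<lambda>y. - w y) x"
  unfolding lstar_def ustar_def lsc_env_uminus by simp

lemma
  fixes w :: "real^'n::finite \<Rightarrow> real"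
  assumes bnd: "\<forall>y. \<bar>w y\<bar> \<le> B"
  shows ustar_ge: "x \<in> closure \<Omega> \<Longrightarrow> w x \<le> ustar \<Omega> w x"
    and abs_ustar_le: "\<bar>ustar \<Omega> w x\<bar> \<le> B"
    and usc_on_ustar: "usc_on (closure \<Omega>) (ustar \<Omega> w)"
proof -
  show "x \<in> closure \<Omega> \<Longrightarrow> w x \<le> ustar \<Omega> w x"
    unfolding ustar_def by (rule usc_env_eq_real(2)[OF bnd])
  have "0 \<le> B"
    using bnd by (meson abs_ge_zero order_trans)
  then show "\<bar>ustar \<Omega> w x\<bar> \<le> B"
    using usc_env_eq_real(3)[OF bnd] usc_env_outside_closure[of x "closure \<Omega>" w]
    unfolding ustar_def by (cases "x \<in> closure \<Omega>") auto
  show "usc_on (closure \<Omega>) (ustar \<Omega> w)"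
    unfolding ustar_def[abs_def] by (rule usc_on_usc_env[OF bnd])
qed

lemma ustar_eq_of_usc_on:
  fixes w :: "real^'n::finite \<Rightarrow> real"
  assumes "usc_on (closure \<Omega>) w" "x \<in> closure \<Omega>"
  shows "ustar \<Omega> w x = w x"
  unfolding ustar_def usc_env_eq_of_usc_on[OF assms] by simp

lemma ustar_idem:
  fixes w :: "real^'n::finite \<Rightarrow> real"
  assumes "\<forall>y. \<bar>w y\<bar> \<le> B"
  shows "ustar \<Omega> (ustar \<Omega> w) = ustar \<Omega> w"
proof
  fix x
  show "ustar \<Omega> (ustar \<Omega> w) x = ustar \<Omega> w x"
  proof (cases "x \<in> closure \<Omega>")
    case True
    then show ?thesis
      by (rule ustar_eq_of_usc_on[OF usc_on_ustar[OF assms]])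
  next
    case False
    then show ?thesis
      by (simp add: ustar_def usc_env_outside_closure)
  qed
qed

lemma Xbar_iff: "w \<in> Xbar \<longleftrightarrow> (\<exists>B. \<forall>y. \<bar>w y\<bar> \<le> B)"
  unfolding Xbar_def bounded_iff by auto

lemma
  fixes w :: "real^'n::finite \<Rightarrow> real"
  assumes "pde_subsol \<Omega> F g w"
  shows pde_subsol_ustar: "pde_subsol \<Omega> F g (ustar \<Omega> w)"
    and usc_on_ustar_subsol: "usc_on (closure \<Omega>) (ustar \<Omega> w)"
    and le_ustar_subsol: "x \<in> closure \<Omega> \<Longrightarrow> w x \<le> ustar \<Omega> w x"
proof -
  obtain B where B: "\<forall>y. \<bar>w y\<bar> \<le> B"
    using assms unfolding pde_subsol_def Xbar_iff by blast
  have "ustar \<Omega> w \<in> Xbar"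
    unfolding Xbar_iff using abs_ustar_le[OF B] by blast
  with assms show "pde_subsol \<Omega> F g (ustar \<Omega> w)"
    unfolding pde_subsol_def ustar_idem[OF B] by blast
  show "usc_on (closure \<Omega>) (ustar \<Omega> w)" and "x \<in> closure \<Omega> \<Longrightarrow> w x \<le> ustar \<Omega> w x"
    by (rule usc_on_ustar[OF B], rule ustar_ge[OF B])
qed

lemma
  fixes w :: "real^'n::finite \<Rightarrow> real"
  assumes "pde_supersol \<Omega> F g w"
  shows pde_supersol_lstar: "pde_supersol \<Omega> F g (lstar \<Omega> w)"
    and lsc_on_lstar_supersol: "lsc_on (closure \<Omega>) (lstar \<Omega> w)"
    and lstar_le_supersol: "x \<in> closure \<Omega> \<Longrightarrow> lstar \<Omega> w x \<le> w x"
proof -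
  obtain B where B: "\<forall>y. \<bar>- w y\<bar> \<le> B"
    using assms unfolding pde_supersol_def Xbar_iff by auto
  have lstar: "lstar \<Omega> w = (\<lambda>x. - ustar \<Omega> (\<lambda>y. - w y) x)"
    by (simp add: lstar_eq_uminus_ustar fun_eq_iff)
  have "lstar \<Omega> w \<in> Xbar"
    unfolding Xbar_iff lstar using abs_ustar_le[OF B] by auto
  moreover have "lstar \<Omega> (lstar \<Omega> w) = lstar \<Omega> w"
    unfolding lstar_eq_uminus_ustar[of \<Omega> "lstar \<Omega> w"] unfolding lstar by (simp add: ustar_idem[OF B])
  ultimately show "pde_supersol \<Omega> F g (lstar \<Omega> w)"
    using assms unfolding pde_supersol_def by simp
  show "lsc_on (closure \<Omega>) (lstar \<Omega> w)"
    unfolding lstar lsc_on_iff_usc_on_uminus by (simp add: usc_on_ustar[OF B])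
  show "x \<in> closure \<Omega> \<Longrightarrow> lstar \<Omega> w x \<le> w x"
    using ustar_ge[OF B] unfolding lstar by force
qed

lemma pde_sol_unique:
  assumes "strong_uniqueness \<Omega> F g" "pde_sol \<Omega> F g v" "pde_sol \<Omega> F g w" "x \<in> closure \<Omega>"
  shows "w x = v x"
proof -
  have "w x \<le> ustar \<Omega> w x" "ustar \<Omega> w x \<le> lstar \<Omega> v x" "lstar \<Omega> v x \<le> v x"
    and "v x \<le> ustar \<Omega> v x" "ustar \<Omega> v x \<le> lstar \<Omega> w x" "lstar \<Omega> w x \<le> w x"
    using assms pde_subsol_ustar usc_on_ustar_subsol le_ustar_subsol
      pde_supersol_lstar lsc_on_lstar_supersol lstar_le_supersol
    unfolding pde_sol_def strong_uniqueness_def by meson+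
  then show ?thesis
    by linarith
qed

lemma pde_supersol_cong:
  assumes "pde_supersol \<Omega> F g v" "w \<in> Xbar" "\<And>x. x \<in> closure \<Omega> \<Longrightarrow> v x = w x"
  shows "pde_supersol \<Omega> F g w"
proof -
  have eq: "lstar \<Omega> v = lstar \<Omega> w"
  proof
    fix x
    have "eventually (\<lambda>y. ereal (v y) = ereal (w y)) (inf (nhds x) (principal (closure \<Omega>)))"
      unfolding eventually_inf_principal using assms(3) by simp
    from Liminf_eq[OF this] show "lstar \<Omega> v x = lstar \<Omega> w x"
      unfolding lstar_def lsc_env_def by simp
  qed
  show ?thesis
    using assms(1,2) unfolding pde_supersol_def eq by blast
qed

section \<open>Smooth bounded test functions\<close>

lemma partial_deriv_eq: "(f has_derivative f') (at x) \<Longrightarrow> partial_deriv i f x = f' (axis i 1)"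
  unfolding partial_deriv_def by (metis frechet_derivative_at)

lemma partial_deriv_add:
  assumes "f differentiable at x" "g differentiable at x"
  shows "partial_deriv i (\<lambda>y. f y + g y) x = partial_deriv i f x + partial_deriv i g x"
proof -
  have "((\<lambda>y. f y + g y) has_derivative (\<lambda>v. frechet_derivative f (at x) v + frechet_derivative g (at x) v)) (at x)"
    using assms by (intro has_derivative_add) (simp_all add: frechet_derivative_works[symmetric])
  then show ?thesis unfolding partial_deriv_def using frechet_derivative_at by metis
qed

lemma partial_deriv_const: "partial_deriv i (\<lambda>y. c) x = 0"
  unfolding partial_deriv_def by simp

lemma partial_deriv_cmult:
  assumes "f differentiable at x"
  shows "partial_deriv i (\<lambda>y. a * f y) x = a * partial_deriv i f x"
proof -
  have "((\<lambda>y. a * f y) has_derivative (\<lambda>v. a * frechet_derivative f (at x) v)) (at x)"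
    using assms by (intro has_derivative_mult_right) (simp_all add: frechet_derivative_works[symmetric])
  then show ?thesis unfolding partial_deriv_def using frechet_derivative_at by metis
qed

lemma bounded_range_cmult: "bounded (range f) \<Longrightarrow> bounded (range (\<lambda>y. a * (f y::real)))"
  using bounded_scaling[of "range f" a] by (simp add: image_image)

lemma Cbk_const: "Cbk k (\<lambda>y::real^'n::finite. c)"
proof (induction k arbitrary: c)
  case 0 then show ?case by (simp add: continuous_on_const)
next
  case (Suc k)
  have "partial_deriv i (\<lambda>y::real^'n. c) = (\<lambda>y. 0)" for i by (rule ext) (rule partial_deriv_const)
  then show ?case using Suc by (simp add: continuous_on_const)
qed

lemma Cbk_add: "Cbk k f \<Longrightarrow> Cbk k g \<Longrightarrow> Cbk k (\<lambda>y::real^'n::finite. f y + g y)"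
proof (induction k arbitrary: f g)
  case 0 then show ?case by (auto intro: continuous_on_add bounded_plus_comp)
next
  case (Suc k)
  have df: "f differentiable_on UNIV" and dg: "g differentiable_on UNIV" using Suc.prems by auto
  have "partial_deriv i (\<lambda>y. f y + g y) = (\<lambda>y. partial_deriv i f y + partial_deriv i g y)" for i
    by (rule ext) (rule partial_deriv_add[OF differentiable_onD[OF df UNIV_I] differentiable_onD[OF dg UNIV_I]])
  then show ?case using Suc df dg
    by (auto intro: continuous_on_add bounded_plus_comp differentiable_on_add)
qed

lemma Cbk_cmult: "Cbk k f \<Longrightarrow> Cbk k (\<lambda>y::real^'n::finite. a * f y)"
proof (induction k arbitrary: f)
  case 0 then show ?case by (auto intro: continuous_on_mult_left bounded_range_cmult)
next
  case (Suc k)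
  have df: "f differentiable_on UNIV" using Suc.prems by auto
  have "partial_deriv i (\<lambda>y. a * f y) = (\<lambda>y. a * partial_deriv i f y)" for i
    by (rule ext) (rule partial_deriv_cmult[OF differentiable_onD[OF df UNIV_I]])
  then show ?case using Suc df
    by (auto intro: continuous_on_mult_left bounded_range_cmult differentiable_on_mult)
qed

lemma Cbk_sum: "finite S \<Longrightarrow> (\<And>i. i \<in> S \<Longrightarrow> Cbk k (f i)) \<Longrightarrow> Cbk k (\<lambda>y::real^'n::finite. \<Sum>i\<in>S. f i y)"
proof (induction S rule: finite_induct)
  case empty then show ?case using Cbk_const[of k 0] by simp
next
  case (insert a S) then show ?case by (simp add: Cbk_add)
qed

lemma Cb_inf_add: "f \<in> Cb_inf \<Longrightarrow> g \<in> Cb_inf \<Longrightarrow> (\<lambda>y. f y + g y) \<in> Cb_inf"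
  unfolding Cb_inf_def by (auto intro: Cbk_add)

lemma Cb_inf_const: "(\<lambda>y. c) \<in> Cb_inf"
  unfolding Cb_inf_def by (auto intro: Cbk_const)

lemma Cb_inf_cmult: "f \<in> Cb_inf \<Longrightarrow> (\<lambda>y. a * f y) \<in> Cb_inf"
  unfolding Cb_inf_def by (auto intro: Cbk_cmult)

lemma Cb_inf_uminus: "f \<in> Cb_inf \<Longrightarrow> (\<lambda>y. - f y) \<in> Cb_inf"
  using Cb_inf_cmult[of f "-1"] by simp

lemma has_derivative_coordinate_comp:
  assumes "\<And>t. (h has_real_derivative h' t) (at t)"
  shows "((\<lambda>y::real^'n::finite. h (y$i - c)) has_derivative (\<lambda>v. h' (y$i - c) * v$i)) (at y)"
proof -
  have 1: "((\<lambda>y::real^'n. y$i - c) has_derivative (\<lambda>v. v$i)) (at y)"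
    by (auto intro!: derivative_eq_intros bounded_linear_imp_has_derivative)
  have 2: "(h has_derivative (\<lambda>x. h' (y$i - c) * x)) (at (y$i - c))"
    using assms[of "y$i - c"] unfolding has_field_derivative_def by simp
  show ?thesis using has_derivative_compose[OF 1 2] by simp
qed

lemma partial_deriv_coordinate_comp:
  assumes "\<And>t. (h has_real_derivative h' t) (at t)"
  shows "partial_deriv j (\<lambda>y::real^'n::finite. h (y$i - c)) y = (if j = i then h' (y$i - c) else 0)"
proof -
  have "partial_deriv j (\<lambda>y::real^'n::finite. h (y$i - c)) y = h' (y$i - c) * (axis j 1 $ i)"
    by (rule partial_deriv_eq[OF has_derivative_coordinate_comp[OF assms]])
  then show ?thesis by (simp add: axis_def)
qed

lemma Cbk_coordinate_comp:
  fixes D :: "nat \<Rightarrow> real \<Rightarrow> real"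
  assumes der: "\<And>n t. (D n has_real_derivative D (Suc n) t) (at t)"
    and bnd: "\<And>n. bounded (range (D n))"
  shows "Cbk k (\<lambda>y::real^'n::finite. D n (y$i - c))"
proof -
  have diff: "(\<lambda>y::real^'n. D n (y$i - c)) differentiable_on UNIV" for n
    using has_derivative_coordinate_comp[OF der] unfolding differentiable_on_def differentiable_def by blast
  have bdd: "bounded (range (\<lambda>y::real^'n. D n (y$i - c)))" for n
    using bnd[of n] by (rule bounded_subset) auto
  have pd: "partial_deriv j (\<lambda>y::real^'n. D n (y$i - c))
      = (if j = i then (\<lambda>y. D (Suc n) (y$i - c)) else (\<lambda>y. 0))" for j n
    by (auto simp: fun_eq_iff partial_deriv_coordinate_comp[OF der])
  show ?thesis
  proof (induction k arbitrary: n)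
    case 0
    show ?case
      using diff bdd by (simp add: differentiable_imp_continuous_on)
  next
    case (Suc k)
    show ?case
      using diff bdd Suc.IH by (simp add: differentiable_imp_continuous_on pd Cbk_const)
  qed
qed

lemma
  assumes "\<phi> \<in> Cb_inf"
  shows Cb_inf_bounded: "\<exists>M. \<forall>y. \<bar>\<phi> y\<bar> \<le> M"
    and Cb_inf_continuous: "continuous_on UNIV \<phi>"
proof -
  have "Cbk 0 \<phi>"
    using assms unfolding Cb_inf_def by blast
  then show "\<exists>M. \<forall>y. \<bar>\<phi> y\<bar> \<le> M" and "continuous_on UNIV \<phi>"
    by (auto simp: bounded_iff)
qed

lemma Cb_inf_differentiable: "f \<in> Cb_inf \<Longrightarrow> f differentiable at x"
proof -
  assume "f \<in> Cb_inf"
  then have "Cbk (Suc 0) f" unfolding Cb_inf_def by blast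
  then have "f differentiable_on UNIV" by simp
  then show ?thesis by (rule differentiable_onD) simp
qed

lemma Cb_inf_partial_deriv_differentiable: "f \<in> Cb_inf \<Longrightarrow> partial_deriv i f differentiable at x"
proof -
  assume "f \<in> Cb_inf"
  then have "Cbk (Suc (Suc 0)) f" unfolding Cb_inf_def by blast
  then have "partial_deriv i f differentiable_on UNIV" by simp
  then show ?thesis by (rule differentiable_onD) simp
qed

lemma
  assumes "f \<in> Cb_inf" "g \<in> Cb_inf"
  shows grad_add: "grad (\<lambda>y. f y + g y) x = grad f x + grad g x"
    and hess_add: "hess (\<lambda>y. f y + g y) x = hess f x + hess g x"
proof -
  show "grad (\<lambda>y. f y + g y) x = grad f x + grad g x"
    by (simp add: grad_def vec_eq_iff partial_deriv_add Cb_inf_differentiable assms)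
  have "partial_deriv i (\<lambda>y. f y + g y) = (\<lambda>y. partial_deriv i f y + partial_deriv i g y)" for i
    by (rule ext) (simp add: partial_deriv_add Cb_inf_differentiable assms)
  then show "hess (\<lambda>y. f y + g y) x = hess f x + hess g x"
    by (simp add: hess_def vec_eq_iff partial_deriv_add Cb_inf_partial_deriv_differentiable assms)
qed

lemma
  fixes x :: "real^'n::finite"
  shows grad_const: "grad (\<lambda>y. c) x = 0" and hess_const: "hess (\<lambda>y. c) x = 0"
proof -
  have "partial_deriv i (\<lambda>y::real^'n. c) = (\<lambda>y. 0)" for i
    by (rule ext) (rule partial_deriv_const)
  then show "grad (\<lambda>y::real^'n. c) x = 0" "hess (\<lambda>y::real^'n. c) x = 0"
    by (simp_all add: grad_def hess_def vec_eq_iff partial_deriv_const)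
qed

lemma
  assumes "f \<in> Cb_inf"
  shows grad_cmult: "grad (\<lambda>y. K * f y) x = K *\<^sub>R grad f x"
    and hess_cmult: "hess (\<lambda>y. K * f y) x = K *\<^sub>R hess f x"
proof -
  show "grad (\<lambda>y. K * f y) x = K *\<^sub>R grad f x"
    by (simp add: grad_def vec_eq_iff partial_deriv_cmult Cb_inf_differentiable assms)
  have "partial_deriv i (\<lambda>y. K * f y) = (\<lambda>y. K * partial_deriv i f y)" for i
    by (rule ext) (simp add: partial_deriv_cmult Cb_inf_differentiable assms)
  then show "hess (\<lambda>y. K * f y) x = K *\<^sub>R hess f x"
    by (simp add: hess_def vec_eq_iff partial_deriv_cmult Cb_inf_partial_deriv_differentiable assms)
qed

lemma
  assumes "\<phi> \<in> Cb_inf" "\<psi> \<in> Cb_inf"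
  shows grad_add_flat: "grad \<psi> a = 0 \<Longrightarrow> grad (\<lambda>y. \<phi> y + (c + K * \<psi> y)) a = grad \<phi> a"
    and hess_add_flat: "hess \<psi> a = 0 \<Longrightarrow> hess (\<lambda>y. \<phi> y + (c + K * \<psi> y)) a = hess \<phi> a"
proof -
  have "(\<lambda>y. K * \<psi> y) \<in> Cb_inf"
    by (rule Cb_inf_cmult[OF assms(2)])
  moreover from this have "(\<lambda>y. c + K * \<psi> y) \<in> Cb_inf"
    by (rule Cb_inf_add[OF Cb_inf_const])
  ultimately show "grad \<psi> a = 0 \<Longrightarrow> grad (\<lambda>y. \<phi> y + (c + K * \<psi> y)) a = grad \<phi> a"
    and "hess \<psi> a = 0 \<Longrightarrow> hess (\<lambda>y. \<phi> y + (c + K * \<psi> y)) a = hess \<phi> a"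
    using assms by (simp_all add: grad_add hess_add grad_const hess_const grad_cmult hess_cmult Cb_inf_const)
qed

lemma norm_le_card_mult_component:
  fixes z :: "real^'n::finite"
  shows "\<exists>j. norm z \<le> real CARD('n) * \<bar>z$j\<bar>"
proof -
  let ?f = "\<lambda>i. \<bar>z$i\<bar>"
  have "Max (range ?f) \<in> range ?f" by (rule Max_in) auto
  then obtain j where j: "Max (range ?f) = ?f j" by blast
  have "norm z \<le> (\<Sum>i\<in>UNIV. ?f i)" by (rule norm_le_l1_cart)
  also have "\<dots> \<le> of_nat (card (UNIV::'n set)) * ?f j"
    by (rule sum_bounded_above) (simp add: j[symmetric])
  finally show ?thesis by auto
qed

text \<open>Since \<open>tanh' = 1 - tanh\<^sup>2\<close>, the \<open>n\<close>-th derivative of \<open>tanh\<^sup>4\<close> is the polynomial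
  \<open>tanh4_poly n\<close> evaluated at \<open>tanh\<close>; in particular it is bounded.\<close>

fun tanh4_poly :: "nat \<Rightarrow> real poly" where
  "tanh4_poly 0 = [:0,0,0,0,1:]"
| "tanh4_poly (Suc n) = pderiv (tanh4_poly n) * [:1,0,-1:]"

definition tanh4_deriv :: "nat \<Rightarrow> real \<Rightarrow> real" where
  "tanh4_deriv n t = poly (tanh4_poly n) (tanh t)"

lemma tanh4_deriv_has_derivative: "(tanh4_deriv n has_real_derivative tanh4_deriv (Suc n) t) (at t)"
proof -
  have "((\<lambda>t. poly (tanh4_poly n) (tanh t)) has_real_derivative poly (pderiv (tanh4_poly n)) (tanh t) * (1 - tanh t ^ 2)) (at t)"
    by (auto intro!: derivative_eq_intros simp: cosh_real_pos[THEN less_imp_neq, symmetric])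
  moreover have "poly (pderiv (tanh4_poly n)) (tanh t) * (1 - tanh t ^ 2) = tanh4_deriv (Suc n) t"
    by (simp add: tanh4_deriv_def power2_eq_square algebra_simps)
  ultimately show ?thesis unfolding tanh4_deriv_def[abs_def] by simp
qed

lemma tanh4_deriv_has_derivative_0: "(tanh4_deriv 0 has_real_derivative tanh4_deriv 1 t) (at t)"
  using tanh4_deriv_has_derivative[of 0] by simp

lemma tanh4_deriv_has_derivative_1: "(tanh4_deriv 1 has_real_derivative tanh4_deriv 2 t) (at t)"
  using tanh4_deriv_has_derivative[of 1] by (simp add: numeral_2_eq_2)

lemma bounded_range_tanh4_deriv: "bounded (range (tanh4_deriv n))"
proof -
  have "compact (poly (tanh4_poly n) ` {-1..1})"
    by (rule compact_continuous_image) (auto intro: continuous_intros)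
  then have "bounded (poly (tanh4_poly n) ` {-1..1})" by (rule compact_imp_bounded)
  moreover have "range (tanh4_deriv n) \<subseteq> poly (tanh4_poly n) ` {-1..1}"
    unfolding tanh4_deriv_def using tanh_real_bounds by (auto intro!: imageI simp: less_imp_le)
  ultimately show ?thesis by (rule bounded_subset)
qed

lemma tanh4_deriv_0: "tanh4_deriv 0 t = tanh t ^ 4"
  by (simp add: tanh4_deriv_def eval_nat_numeral algebra_simps)

lemma tanh4_deriv_at_0: "tanh4_deriv 0 0 = 0" "tanh4_deriv (Suc 0) 0 = 0" "tanh4_deriv 2 0 = 0"
  by (simp_all add: tanh4_deriv_def numeral_2_eq_2 pderiv_mult pderiv_pCons)

text \<open>A penalty in \<open>C\<^sub>b\<^sup>\<infinity>\<close> with a strict minimum \<open>0\<close> at \<open>a\<close>, flat to second order there, so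
  adding it to a test function changes neither gradient nor Hessian at \<open>a\<close>.\<close>

definition tanh_penalty :: "real^'n::finite \<Rightarrow> real^'n \<Rightarrow> real" where
  "tanh_penalty a y = (\<Sum>i\<in>UNIV. tanh4_deriv 0 (y$i - a$i))"

lemma tanh_penalty_Cb_inf: "tanh_penalty a \<in> Cb_inf"
  unfolding Cb_inf_def tanh_penalty_def[abs_def]
  by (auto intro!: Cbk_sum Cbk_coordinate_comp tanh4_deriv_has_derivative bounded_range_tanh4_deriv)

lemma has_derivative_tanh_penalty: "(tanh_penalty a has_derivative (\<lambda>v. \<Sum>i\<in>UNIV. tanh4_deriv 1 (y$i - a$i) * v$i)) (at y)"
  unfolding tanh_penalty_def[abs_def] by (intro has_derivative_sum has_derivative_coordinate_comp tanh4_deriv_has_derivative_0)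

lemma partial_deriv_tanh_penalty: "partial_deriv i (tanh_penalty a) = (\<lambda>y. tanh4_deriv 1 (y$i - a$i))"
proof
  fix y
  have "partial_deriv i (tanh_penalty a) y = (\<Sum>k\<in>UNIV. tanh4_deriv 1 (y$k - a$k) * (axis i 1 $ k))"
    by (rule partial_deriv_eq[OF has_derivative_tanh_penalty])
  also have "\<dots> = tanh4_deriv 1 (y$i - a$i)" by (simp add: axis_def if_distrib cong: if_cong)
  finally show "partial_deriv i (tanh_penalty a) y = tanh4_deriv 1 (y$i - a$i)" .
qed

lemma grad_tanh_penalty: "grad (tanh_penalty a) a = 0"
  by (simp add: grad_def vec_eq_iff partial_deriv_tanh_penalty tanh4_deriv_at_0)

lemma hess_tanh_penalty:
  fixes a :: "real^'n::finite"
  shows "hess (tanh_penalty a) a = 0"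
proof -
  have "partial_deriv j (\<lambda>y::real^'n. tanh4_deriv 1 (y$i - a$i)) a = 0" for i j
    using partial_deriv_coordinate_comp[of "tanh4_deriv 1" "tanh4_deriv 2" j i "a$i" a, OF tanh4_deriv_has_derivative_1] by (simp add: tanh4_deriv_at_0)
  then show ?thesis by (simp add: hess_def vec_eq_iff partial_deriv_tanh_penalty)
qed

lemma tanh_penalty_self: "tanh_penalty a a = 0"
  by (simp add: tanh_penalty_def tanh4_deriv_at_0)

lemma tanh_penalty_nonneg: "tanh_penalty a y \<ge> 0"
  unfolding tanh_penalty_def tanh4_deriv_0 by (intro sum_nonneg) (simp add: zero_le_even_power)

lemma tanh_penalty_ge_component: "tanh_penalty a y \<ge> tanh \<bar>y$j - a$j\<bar> ^ 4"
proof -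
  have "tanh \<bar>y$j - a$j\<bar> ^ 4 = tanh4_deriv 0 (y$j - a$j)" unfolding tanh4_deriv_0 tanh_real_abs by (simp add: power_even_abs)
  also have "\<dots> \<le> (\<Sum>i\<in>UNIV. tanh4_deriv 0 (y$i - a$i))"
    by (rule member_le_sum) (auto simp: tanh4_deriv_0 zero_le_even_power)
  finally show ?thesis unfolding tanh_penalty_def .
qed

lemma tanh_penalty_bounded_away:
  fixes a :: "real^'n::finite"
  assumes "0 < r"
  shows "\<exists>\<eta>>0. \<forall>y. r \<le> dist y a \<longrightarrow> \<eta> \<le> tanh_penalty a y"
proof (intro exI[of _ "tanh (r / real CARD('n)) ^ 4"] conjI allI impI)
  show "0 < tanh (r / real CARD('n)) ^ 4"
    using assms by simp
  fix y assume "r \<le> dist y a"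
  obtain j where j: "norm (y - a) \<le> real CARD('n) * \<bar>(y - a)$j\<bar>"
    using norm_le_card_mult_component by blast
  have "r / real CARD('n) \<le> \<bar>y$j - a$j\<bar>"
    using j \<open>r \<le> dist y a\<close> by (simp add: dist_norm field_simps)
  then have "tanh (r / real CARD('n)) \<le> tanh \<bar>y$j - a$j\<bar>"
    by (simp del: tanh_real_abs)
  moreover have "0 \<le> tanh (r / real CARD('n))"
    using assms by simp
  ultimately have "tanh (r / real CARD('n)) ^ 4 \<le> tanh \<bar>y$j - a$j\<bar> ^ 4"
    by (rule power_mono)
  then show "tanh (r / real CARD('n)) ^ 4 \<le> tanh_penalty a y"
    using tanh_penalty_ge_component[of y j a] by linarith
qed

section \<open>Penalisation at a maximum point\<close>

lemma approximate_sup_near: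
  fixes f :: "'a::metric_space \<Rightarrow> real"
  assumes le: "\<And>z. f z \<le> \<epsilon>" and "- \<tau> < f y1"
    and far: "\<And>z. r \<le> dist z x0 \<Longrightarrow> f z \<le> - \<gamma>" and "0 < \<eta>" and "\<tau> + \<eta> \<le> \<gamma>"
  shows "\<exists>y \<xi>. dist y x0 < r \<and> - \<tau> < \<xi> \<and> \<xi> \<le> \<epsilon> \<and> (\<forall>z. f z \<le> \<xi>) \<and> \<xi> - \<eta> < f y"
proof -
  define \<xi> where "\<xi> = (SUP z. f z)"
  have bdd: "bdd_above (range f)"
    using le by (intro bdd_aboveI[where M=\<epsilon>]) auto
  have ge: "f z \<le> \<xi>" for z
    unfolding \<xi>_def using bdd by (rule cSUP_upper[OF UNIV_I])
  have "\<xi> \<le> \<epsilon>"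
    unfolding \<xi>_def using le by (intro cSUP_least) auto
  moreover have "- \<tau> < \<xi>"
    using ge[of y1] \<open>- \<tau> < f y1\<close> by linarith
  moreover obtain y where y: "\<xi> - \<eta> < f y"
    using less_cSUP_iff[OF _ bdd, of "\<xi> - \<eta>"] \<open>0 < \<eta>\<close> unfolding \<xi>_def by auto
  moreover have "dist y x0 < r"
  proof (rule ccontr)
    assume "\<not> dist y x0 < r"
    then have "f y \<le> - \<gamma>" by (intro far) simp
    with y \<open>- \<tau> < \<xi>\<close> \<open>\<tau> + \<eta> \<le> \<gamma>\<close> show False by linarith
  qed
  ultimately show ?thesis
    using ge by blast
qed

lemma eventually_le_near:
  fixes u :: "real \<Rightarrow> 'a::heine_borel \<Rightarrow> real"
  assumes bnd: "\<forall>\<rho>>0. \<forall>y. \<bar>u \<rho> y\<bar> \<le> M" and "continuous_on UNIV \<Phi>"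
    and le: "\<forall>y\<in>closure \<Omega>. upper_relaxed_limit u y \<le> \<Phi> y"
    and boundary: "eventually (\<lambda>y. y \<notin> \<Omega> \<longrightarrow> (\<forall>\<rho>>0. u \<rho> y \<le> \<Phi> y)) (nhds x0)"
  shows "\<exists>R>0. \<forall>\<epsilon>>0. eventually (\<lambda>\<rho>. \<forall>z. dist z x0 < R \<longrightarrow> u \<rho> z \<le> \<Phi> z + \<epsilon>) (at_right 0)"
proof -
  obtain R where "0 < R" and R: "\<forall>y. dist y x0 < R \<longrightarrow> y \<notin> \<Omega> \<longrightarrow> (\<forall>\<rho>>0. u \<rho> y \<le> \<Phi> y)"
    using boundary unfolding eventually_nhds_metric by blast
  have "eventually (\<lambda>\<rho>. \<forall>z. dist z x0 < R \<longrightarrow> u \<rho> z \<le> \<Phi> z + \<epsilon>) (at_right 0)" if "0 < \<epsilon>" for \<epsilon>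
  proof -
    have "compact (cball x0 R \<inter> closure \<Omega>)"
      by (intro compact_Int_closed) auto
    moreover have "\<forall>z\<in>cball x0 R \<inter> closure \<Omega>.
        eventually (\<lambda>(\<rho>, y). u \<rho> y < \<Phi> y + \<epsilon>) (at_right 0 \<times>\<^sub>F nhds z)"
    proof
      fix z assume "z \<in> cball x0 R \<inter> closure \<Omega>"
      moreover have "isCont \<Phi> z"
        using \<open>continuous_on UNIV \<Phi>\<close> by (simp add: continuous_on_eq_continuous_at)
      ultimately show "eventually (\<lambda>(\<rho>, y). u \<rho> y < \<Phi> y + \<epsilon>) (at_right 0 \<times>\<^sub>F nhds z)"
        using le \<open>0 < \<epsilon>\<close> by (intro eventually_less_of_upper_relaxed_limit_le[OF bnd]) auto
    qed
    ultimately have "eventually (\<lambda>\<rho>. \<forall>z\<in>cball x0 R \<inter> closure \<Omega>. u \<rho> z < \<Phi> z + \<epsilon>) (at_right 0)"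
      by (rule eventually_ball_compact)
    then show ?thesis
    proof (rule eventually_mono[OF eventually_conj[OF _ eventually_at_right_less]], intro allI impI)
      fix \<rho> z assume \<rho>: "(\<forall>z\<in>cball x0 R \<inter> closure \<Omega>. u \<rho> z < \<Phi> z + \<epsilon>) \<and> 0 < \<rho>" and "dist z x0 < R"
      show "u \<rho> z \<le> \<Phi> z + \<epsilon>"
      proof (cases "z \<in> \<Omega>")
        case True
        then have "z \<in> cball x0 R \<inter> closure \<Omega>"
          using \<open>dist z x0 < R\<close> closure_subset by (auto simp: dist_commute)
        with \<rho> show ?thesis
          by (meson less_imp_le)
      next
        case False
        then have "u \<rho> z \<le> \<Phi> z"
          using R \<open>dist z x0 < R\<close> \<rho> by blast
        with \<open>0 < \<epsilon>\<close> show ?thesis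
          by linarith
      qed
    qed
  qed
  with \<open>0 < R\<close> show ?thesis
    by blast
qed

lemma exists_penalty_dominating_far:
  fixes u :: "real \<Rightarrow> 'a::metric_space \<Rightarrow> real"
  assumes bnd: "\<forall>\<rho>>0. \<forall>y. \<bar>u \<rho> y\<bar> \<le> M" and \<Phi>_bnd: "\<forall>y. \<bar>\<Phi> y\<bar> \<le> M\<Phi>"
    and "0 < \<eta>" and \<eta>: "\<forall>y. R \<le> dist y x0 \<longrightarrow> \<eta> \<le> \<psi> y"
  shows "\<exists>K>0. \<forall>\<rho>>0. \<forall>z. R \<le> dist z x0 \<longrightarrow> u \<rho> z - (\<Phi> z + K * \<psi> z) \<le> -1"
proof -
  define K where "K = (M + M\<Phi> + 1) / \<eta>"
  have "0 \<le> M" "0 \<le> M\<Phi>"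
    using bnd \<Phi>_bnd by (meson abs_ge_zero order_trans zero_less_one)+
  then have "0 < K" and K: "K * \<eta> = M + M\<Phi> + 1"
    unfolding K_def using \<open>0 < \<eta>\<close> by auto
  have "u \<rho> z - (\<Phi> z + K * \<psi> z) \<le> -1" if "0 < \<rho>" "R \<le> dist z x0" for \<rho> z
  proof -
    have "K * \<eta> \<le> K * \<psi> z"
      using \<eta> that(2) \<open>0 < K\<close> by simp
    moreover have "u \<rho> z \<le> M" "- M\<Phi> \<le> \<Phi> z"
      using bnd \<Phi>_bnd that(1) abs_le_D1 abs_le_D2 by (metis minus_le_iff)+
    ultimately show ?thesis
      using K by linarith
  qed
  with \<open>0 < K\<close> show ?thesis
    by blast
qed

lemma penalised_sup_estimate:
  fixes u :: "real \<Rightarrow> 'a::metric_space \<Rightarrow> real"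
  assumes bnd: "\<forall>\<rho>>0. \<forall>y. \<bar>u \<rho> y\<bar> \<le> M" and \<Phi>_bnd: "\<forall>y. \<bar>\<Phi> y\<bar> \<le> M\<Phi>"
    and "0 < R" and near: "\<And>\<epsilon>. 0 < \<epsilon> \<Longrightarrow> eventually (\<lambda>\<rho>. \<forall>z. dist z x0 < R \<longrightarrow> u \<rho> z \<le> \<Phi> z + \<epsilon>) (at_right 0)"
    and \<psi>_nonneg: "\<And>y. 0 \<le> \<psi> y"
    and \<psi>_away: "\<And>r. 0 < r \<Longrightarrow> \<exists>\<eta>>0. \<forall>y. r \<le> dist y x0 \<longrightarrow> \<eta> \<le> \<psi> y"
  shows "\<exists>K. \<forall>r>0. \<exists>\<gamma>>0. \<forall>\<epsilon>. 0 < \<epsilon> \<and> \<epsilon> \<le> \<gamma> \<longrightarrow> eventually (\<lambda>\<rho>. \<forall>z.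
      u \<rho> z - (\<Phi> z + K * \<psi> z) \<le> \<epsilon> \<and> (r \<le> dist z x0 \<longrightarrow> u \<rho> z - (\<Phi> z + K * \<psi> z) \<le> - \<gamma>)) (at_right 0)"
proof -
  obtain K where "0 < K" and far: "\<forall>\<rho>>0. \<forall>z. R \<le> dist z x0 \<longrightarrow> u \<rho> z - (\<Phi> z + K * \<psi> z) \<le> -1"
    using \<psi>_away[OF \<open>0 < R\<close>] exists_penalty_dominating_far[OF bnd \<Phi>_bnd] by blast
  have "\<exists>\<gamma>>0. \<forall>\<epsilon>. 0 < \<epsilon> \<and> \<epsilon> \<le> \<gamma> \<longrightarrow> eventually (\<lambda>\<rho>. \<forall>z.
      u \<rho> z - (\<Phi> z + K * \<psi> z) \<le> \<epsilon> \<and> (r \<le> dist z x0 \<longrightarrow> u \<rho> z - (\<Phi> z + K * \<psi> z) \<le> - \<gamma>)) (at_right 0)"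
    if "0 < r" for r
  proof -
    obtain \<eta> where "0 < \<eta>" and \<eta>: "\<forall>y. r \<le> dist y x0 \<longrightarrow> \<eta> \<le> \<psi> y"
      using \<psi>_away[OF \<open>0 < r\<close>] by blast
    define \<gamma> where "\<gamma> = min 1 (K * \<eta> / 2)"
    have "0 < \<gamma>" "\<gamma> \<le> 1" "\<gamma> \<le> K * \<eta> / 2"
      unfolding \<gamma>_def using \<open>0 < K\<close> \<open>0 < \<eta>\<close> by auto
    have "eventually (\<lambda>\<rho>. \<forall>z. u \<rho> z - (\<Phi> z + K * \<psi> z) \<le> \<epsilon>
        \<and> (r \<le> dist z x0 \<longrightarrow> u \<rho> z - (\<Phi> z + K * \<psi> z) \<le> - \<gamma>)) (at_right 0)"
      if "0 < \<epsilon>" "\<epsilon> \<le> \<gamma>" for \<epsilon>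
      using near[OF \<open>0 < \<epsilon>\<close>] eventually_at_right_less
    proof eventually_elim
      case (elim \<rho>)
      show ?case
      proof (intro allI conjI impI)
        fix z
        have "0 \<le> K * \<psi> z"
          using \<psi>_nonneg \<open>0 < K\<close> by simp
        then show "u \<rho> z - (\<Phi> z + K * \<psi> z) \<le> \<epsilon>"
          using elim far \<open>0 < \<epsilon>\<close> by (cases "dist z x0 < R") (auto, fastforce simp: not_less)
        assume "r \<le> dist z x0"
        then have "K * \<eta> \<le> K * \<psi> z"
          using \<eta> \<open>0 < K\<close> by simp
        then show "u \<rho> z - (\<Phi> z + K * \<psi> z) \<le> - \<gamma>"
          using elim far \<open>\<epsilon> \<le> \<gamma>\<close> \<open>\<gamma> \<le> K * \<eta> / 2\<close> \<open>\<gamma> \<le> 1\<close>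
          by (cases "dist z x0 < R") (auto, fastforce simp: not_less)
      qed
    qed
    with \<open>0 < \<gamma>\<close> show ?thesis
      by blast
  qed
  then show ?thesis
    by blast
qed

lemma frequently_touching_from_above:
  fixes u :: "real \<Rightarrow> 'a::metric_space \<Rightarrow> real"
  assumes est: "\<forall>r>0. \<exists>\<gamma>>0. \<forall>\<epsilon>. 0 < \<epsilon> \<and> \<epsilon> \<le> \<gamma> \<longrightarrow>
      eventually (\<lambda>\<rho>. \<forall>z. u \<rho> z - \<phi> z \<le> \<epsilon> \<and> (r \<le> dist z x0 \<longrightarrow> u \<rho> z - \<phi> z \<le> - \<gamma>)) (at_right 0)"
    and freq: "\<And>\<tau>. 0 < \<tau> \<Longrightarrow> frequently (\<lambda>(\<rho>, y). - \<tau> < u \<rho> y - \<phi> y) (at_right 0 \<times>\<^sub>F nhds x0)"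
    and \<omega>: "\<forall>\<rho>>0. 0 < \<omega> \<rho>"
  shows "frequently (\<lambda>(\<rho>, y, \<xi>). 0 < \<rho> \<and> (\<forall>z. u \<rho> z \<le> \<phi> z + \<xi>) \<and> \<phi> y + \<xi> - \<omega> \<rho> \<le> u \<rho> y)
    (at_right 0 \<times>\<^sub>F nhds x0 \<times>\<^sub>F nhds 0)"
  unfolding frequently_at_right_prod_nhds_nhds_iff
proof (intro allI impI)
  fix d e e' :: real assume "0 < d" "0 < e" "0 < e'"
  obtain \<gamma> where "0 < \<gamma>" and \<gamma>: "\<forall>\<epsilon>. 0 < \<epsilon> \<and> \<epsilon> \<le> \<gamma> \<longrightarrow>
      eventually (\<lambda>\<rho>. \<forall>z. u \<rho> z - \<phi> z \<le> \<epsilon> \<and> (e \<le> dist z x0 \<longrightarrow> u \<rho> z - \<phi> z \<le> - \<gamma>)) (at_right 0)"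
    using est \<open>0 < e\<close> by blast
  define \<tau> where "\<tau> = min (\<gamma>/2) (e'/2)"
  define \<epsilon> where "\<epsilon> = min \<gamma> (e'/2)"
  have "0 < \<tau>" "\<tau> \<le> \<gamma>/2" "\<tau> < e'" "0 < \<epsilon>" "\<epsilon> \<le> \<gamma>" "\<epsilon> < e'"
    unfolding \<tau>_def \<epsilon>_def using \<open>0 < \<gamma>\<close> \<open>0 < e'\<close> by auto
  let ?good = "\<lambda>\<rho>. \<rho> \<in> {0<..<d} \<and> (\<forall>z. u \<rho> z - \<phi> z \<le> \<epsilon> \<and> (e \<le> dist z x0 \<longrightarrow> u \<rho> z - \<phi> z \<le> - \<gamma>))"
  have "eventually ?good (at_right 0)"
    using eventually_conj[OF eventually_at_right_real[OF \<open>0 < d\<close>]] \<gamma> \<open>0 < \<epsilon>\<close> \<open>\<epsilon> \<le> \<gamma>\<close> by blast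
  moreover have "eventually (\<lambda>y. dist y x0 < e) (nhds x0)"
    unfolding eventually_nhds_metric using \<open>0 < e\<close> by blast
  ultimately have "eventually (\<lambda>p. ?good (fst p) \<and> dist (snd p) x0 < e) (at_right 0 \<times>\<^sub>F nhds x0)"
    by (rule eventually_prodI)
  from frequently_ex[OF frequently_eventually_conj[OF freq[OF \<open>0 < \<tau>\<close>] this]]
  obtain \<rho> y1 where "?good \<rho>" "- \<tau> < u \<rho> y1 - \<phi> y1"
    by auto
  define \<eta> where "\<eta> = min (\<omega> \<rho>) (\<gamma>/2)"
  have "0 < \<eta>" "\<eta> \<le> \<omega> \<rho>" "\<tau> + \<eta> \<le> \<gamma>"
    unfolding \<eta>_def using \<omega> \<open>?good \<rho>\<close> \<open>0 < \<gamma>\<close> \<open>\<tau> \<le> \<gamma>/2\<close> by auto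
  with \<open>- \<tau> < u \<rho> y1 - \<phi> y1\<close> \<open>?good \<rho>\<close>
  obtain y \<xi> where "dist y x0 < e" "- \<tau> < \<xi>" "\<xi> \<le> \<epsilon>" "\<forall>z. u \<rho> z - \<phi> z \<le> \<xi>"
      "\<xi> - \<eta> < u \<rho> y - \<phi> y"
    using approximate_sup_near[of "\<lambda>z. u \<rho> z - \<phi> z" \<epsilon> \<tau> y1 e x0 \<gamma> \<eta>] by blast
  then show "\<exists>\<rho> y \<xi>. 0 < \<rho> \<and> \<rho> < d \<and> dist y x0 < e \<and> \<bar>\<xi>\<bar> < e' \<and>
      (\<lambda>(\<rho>, y, \<xi>). 0 < \<rho> \<and> (\<forall>z. u \<rho> z \<le> \<phi> z + \<xi>) \<and> \<phi> y + \<xi> - \<omega> \<rho> \<le> u \<rho> y) (\<rho>, y, \<xi>)"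
    using \<open>?good \<rho>\<close> \<open>\<eta> \<le> \<omega> \<rho>\<close> \<open>\<tau> < e'\<close> \<open>\<epsilon> < e'\<close>
    by (intro exI[of _ \<rho>] exI[of _ y] exI[of _ \<xi>]) (auto simp: abs_less_iff algebra_simps)
qed

lemma upper_relaxed_limit_touching:
  fixes u :: "real \<Rightarrow> real^'n::finite \<Rightarrow> real"
  assumes bnd: "\<forall>\<rho>>0. \<forall>y. \<bar>u \<rho> y\<bar> \<le> M" and "\<Phi> \<in> Cb_inf"
    and le: "\<forall>y\<in>closure \<Omega>. upper_relaxed_limit u y \<le> \<Phi> y" and eq: "upper_relaxed_limit u x0 = \<Phi> x0"
    and boundary: "eventually (\<lambda>y. y \<notin> \<Omega> \<longrightarrow> (\<forall>\<rho>>0. u \<rho> y \<le> \<Phi> y)) (nhds x0)"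
  shows "\<exists>K. \<forall>\<omega>. (\<forall>\<rho>>0. 0 < \<omega> \<rho>) \<longrightarrow> frequently (\<lambda>(\<rho>, y, \<xi>). 0 < \<rho>
      \<and> (\<forall>z. u \<rho> z \<le> \<Phi> z + K * tanh_penalty x0 z + \<xi>)
      \<and> \<Phi> y + K * tanh_penalty x0 y + \<xi> - \<omega> \<rho> \<le> u \<rho> y) (at_right 0 \<times>\<^sub>F nhds x0 \<times>\<^sub>F nhds 0)"
proof -
  obtain M\<Phi> where \<Phi>_bnd: "\<forall>y. \<bar>\<Phi> y\<bar> \<le> M\<Phi>"
    using Cb_inf_bounded[OF \<open>\<Phi> \<in> Cb_inf\<close>] by blast
  obtain R where "0 < R"
    and near: "\<forall>\<epsilon>>0. eventually (\<lambda>\<rho>. \<forall>z. dist z x0 < R \<longrightarrow> u \<rho> z \<le> \<Phi> z + \<epsilon>) (at_right 0)"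
    using eventually_le_near[OF bnd Cb_inf_continuous[OF \<open>\<Phi> \<in> Cb_inf\<close>] le boundary] by blast
  from penalised_sup_estimate[OF bnd \<Phi>_bnd \<open>0 < R\<close> near[rule_format] tanh_penalty_nonneg
      tanh_penalty_bounded_away]
  obtain K where est: "\<forall>r>0. \<exists>\<gamma>>0. \<forall>\<epsilon>. 0 < \<epsilon> \<and> \<epsilon> \<le> \<gamma> \<longrightarrow> eventually (\<lambda>\<rho>. \<forall>z.
      u \<rho> z - (\<Phi> z + K * tanh_penalty x0 z) \<le> \<epsilon>
      \<and> (r \<le> dist z x0 \<longrightarrow> u \<rho> z - (\<Phi> z + K * tanh_penalty x0 z) \<le> - \<gamma>)) (at_right 0)"
    ..
  have "(\<lambda>z. \<Phi> z + K * tanh_penalty x0 z) \<in> Cb_inf"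
    using \<open>\<Phi> \<in> Cb_inf\<close> tanh_penalty_Cb_inf by (intro Cb_inf_add Cb_inf_cmult)
  then have "isCont (\<lambda>z. \<Phi> z + K * tanh_penalty x0 z) x0"
    using Cb_inf_continuous continuous_on_eq_continuous_at by blast
  then have freq: "frequently (\<lambda>(\<rho>, y). - \<tau> < u \<rho> y - (\<Phi> y + K * tanh_penalty x0 y)) (at_right 0 \<times>\<^sub>F nhds x0)"
    if "0 < \<tau>" for \<tau>
    using frequently_close_of_upper_relaxed_limit_eq[OF bnd _ _ that] eq by (simp add: tanh_penalty_self)
  show ?thesis
  proof (intro exI[of _ K] allI impI)
    fix \<omega> :: "real \<Rightarrow> real" assume "\<forall>\<rho>>0. 0 < \<omega> \<rho>"
    from frequently_touching_from_above[OF est freq this]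
    show "frequently (\<lambda>(\<rho>, y, \<xi>). 0 < \<rho> \<and> (\<forall>z. u \<rho> z \<le> \<Phi> z + K * tanh_penalty x0 z + \<xi>)
        \<and> \<Phi> y + K * tanh_penalty x0 y + \<xi> - \<omega> \<rho> \<le> u \<rho> y) (at_right 0 \<times>\<^sub>F nhds x0 \<times>\<^sub>F nhds 0)"
      by simp
  qed
qed

section \<open>Consistency at touching points\<close>

lemma dpp_sol_outside: "dpp_sol \<Omega> X A g \<rho> v \<Longrightarrow> y \<notin> \<Omega> \<Longrightarrow> v y = g y"
  unfolding dpp_sol_def dpp_subsol_def dpp_supersol_def by (meson antisym)

lemma positive_modulus_pos: "positive_modulus \<omega> \<Longrightarrow> 0 < \<rho> \<Longrightarrow> 0 < \<omega> \<rho>"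
  unfolding positive_modulus_def by (metis atLeast_iff less_imp_le order_refl strict_mono_onD)

lemma B_op_nonpos_of_touching_above:
  assumes "scheme_assms \<Omega> X A" "0 < \<rho>" "dpp_sol \<Omega> X A g \<rho> v" "\<phi> \<in> X"
    and "\<forall>z. v z \<le> \<phi> z" "s \<le> v y"
  shows "B_op \<Omega> A g \<rho> y \<phi> s \<le> 0"
proof (cases "y \<in> \<Omega>")
  case True
  have "A \<rho> y \<phi> s \<le> A \<rho> y \<phi> (v y)"
    using assms(1,2,4,6) True unfolding scheme_assms_def by blast
  also have "\<dots> \<le> 0"
    using assms(3,4,5) True unfolding dpp_sol_def dpp_subsol_def le_fun_def by blast
  finally show ?thesis
    using True unfolding B_op_def by simp
next
  case False
  then show ?thesis
    using assms(6) dpp_sol_outside[OF assms(3) False] unfolding B_op_def by simp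
qed

lemma B_op_nonneg_of_touching_below:
  assumes "scheme_assms \<Omega> X A" "0 < \<rho>" "dpp_sol \<Omega> X A g \<rho> v" "\<phi> \<in> X"
    and "\<forall>z. \<phi> z \<le> v z" "v y \<le> s"
  shows "0 \<le> B_op \<Omega> A g \<rho> y \<phi> s"
proof (cases "y \<in> \<Omega>")
  case True
  have "0 \<le> A \<rho> y \<phi> (v y)"
    using assms(3,4,5) True unfolding dpp_sol_def dpp_supersol_def le_fun_def by blast
  also have "\<dots> \<le> A \<rho> y \<phi> s"
    using assms(1,2,4,6) True unfolding scheme_assms_def by blast
  finally show ?thesis
    using True unfolding B_op_def by simp
next
  case False
  then show ?thesis
    using assms(6) dpp_sol_outside[OF assms(3) False] unfolding B_op_def by simp
qed

lemma subsolution_inequality_of_consistency: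
  assumes cons: "consistent \<Omega> A g F" and sch: "scheme_assms \<Omega> X A" and "Cb_inf \<subseteq> X"
    and sol: "\<forall>\<rho>>0. dpp_sol \<Omega> X A g \<rho> (u \<rho>)"
    and "x0 \<in> closure \<Omega>" and "\<phi> \<in> Cb_inf"
    and touch: "\<forall>\<omega>. (\<forall>\<rho>>0. 0 < \<omega> \<rho>) \<longrightarrow> frequently (\<lambda>(\<rho>, y, \<xi>). 0 < \<rho>
      \<and> (\<forall>z. u \<rho> z \<le> \<phi> z + \<xi>) \<and> \<phi> y + \<xi> - \<omega> \<rho> \<le> u \<rho> y) (at_right 0 \<times>\<^sub>F nhds x0 \<times>\<^sub>F nhds 0)"
  shows "(if x0 \<in> \<Omega> then F_lower \<Omega> F x0 (\<phi> x0) (grad \<phi> x0) (hess \<phi> x0)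
      else min (ereal (\<phi> x0) - usc_env UNIV g x0) (F_lower \<Omega> F x0 (\<phi> x0) (grad \<phi> x0) (hess \<phi> x0))) \<le> 0"
proof -
  have "Liminf (at_right 0 \<times>\<^sub>F nhds x0 \<times>\<^sub>F nhds 0)
      (\<lambda>(\<rho>, y, \<xi>). ereal (B_op \<Omega> A g \<rho> y (\<lambda>z. \<phi> z + \<xi>) (\<phi> y + \<xi> - \<omega> \<rho>))) \<le> 0"
    if "positive_modulus \<omega>" for \<omega>
  proof (rule Liminf_le_of_frequently)
    show "frequently (\<lambda>p. (\<lambda>(\<rho>, y, \<xi>). ereal (B_op \<Omega> A g \<rho> y (\<lambda>z. \<phi> z + \<xi>) (\<phi> y + \<xi> - \<omega> \<rho>))) p \<le> 0)
        (at_right 0 \<times>\<^sub>F nhds x0 \<times>\<^sub>F nhds 0)"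
      using touch positive_modulus_pos[OF that]
    proof (elim allE impE frequently_elim1; clarsimp)
      fix \<rho> y \<xi> assume "0 < \<rho>" "\<forall>z. u \<rho> z \<le> \<phi> z + \<xi>" "\<phi> y + \<xi> - \<omega> \<rho> \<le> u \<rho> y"
      moreover have "(\<lambda>z. \<phi> z + \<xi>) \<in> X"
        using \<open>\<phi> \<in> Cb_inf\<close> \<open>Cb_inf \<subseteq> X\<close> Cb_inf_add[OF _ Cb_inf_const] by blast
      ultimately show "B_op \<Omega> A g \<rho> y (\<lambda>z. \<phi> z + \<xi>) (\<phi> y + \<xi> - \<omega> \<rho>) \<le> 0"
        using sol by (intro B_op_nonpos_of_touching_above[OF sch]) auto
    qed
  qed
  then show ?thesis
    using cons \<open>x0 \<in> closure \<Omega>\<close> \<open>\<phi> \<in> Cb_inf\<close> unfolding consistent_def by (meson order_trans)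
qed

lemma supersolution_inequality_of_consistency:
  assumes cons: "consistent \<Omega> A g F" and sch: "scheme_assms \<Omega> X A" and "Cb_inf \<subseteq> X"
    and sol: "\<forall>\<rho>>0. dpp_sol \<Omega> X A g \<rho> (u \<rho>)"
    and "x0 \<in> closure \<Omega>" and "\<phi> \<in> Cb_inf"
    and touch: "\<forall>\<omega>. (\<forall>\<rho>>0. 0 < \<omega> \<rho>) \<longrightarrow> frequently (\<lambda>(\<rho>, y, \<xi>). 0 < \<rho>
      \<and> (\<forall>z. \<phi> z + \<xi> \<le> u \<rho> z) \<and> u \<rho> y \<le> \<phi> y + \<xi> + \<omega> \<rho>) (at_right 0 \<times>\<^sub>F nhds x0 \<times>\<^sub>F nhds 0)"
  shows "0 \<le> (if x0 \<in> \<Omega> then F_upper \<Omega> F x0 (\<phi> x0) (grad \<phi> x0) (hess \<phi> x0)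
      else max (ereal (\<phi> x0) - lsc_env UNIV g x0) (F_upper \<Omega> F x0 (\<phi> x0) (grad \<phi> x0) (hess \<phi> x0)))"
proof -
  have "0 \<le> Limsup (at_right 0 \<times>\<^sub>F nhds x0 \<times>\<^sub>F nhds 0)
      (\<lambda>(\<rho>, y, \<xi>). ereal (B_op \<Omega> A g \<rho> y (\<lambda>z. \<phi> z + \<xi>) (\<phi> y + \<xi> + \<omega> \<rho>)))"
    if "positive_modulus \<omega>" for \<omega>
  proof (rule Limsup_ge_of_frequently)
    show "frequently (\<lambda>p. 0 \<le> (\<lambda>(\<rho>, y, \<xi>). ereal (B_op \<Omega> A g \<rho> y (\<lambda>z. \<phi> z + \<xi>) (\<phi> y + \<xi> + \<omega> \<rho>))) p)
        (at_right 0 \<times>\<^sub>F nhds x0 \<times>\<^sub>F nhds 0)"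
      using touch positive_modulus_pos[OF that]
    proof (elim allE impE frequently_elim1; clarsimp)
      fix \<rho> y \<xi> assume "0 < \<rho>" "\<forall>z. \<phi> z + \<xi> \<le> u \<rho> z" "u \<rho> y \<le> \<phi> y + \<xi> + \<omega> \<rho>"
      moreover have "(\<lambda>z. \<phi> z + \<xi>) \<in> X"
        using \<open>\<phi> \<in> Cb_inf\<close> \<open>Cb_inf \<subseteq> X\<close> Cb_inf_add[OF _ Cb_inf_const] by blast
      ultimately show "0 \<le> B_op \<Omega> A g \<rho> y (\<lambda>z. \<phi> z + \<xi>) (\<phi> y + \<xi> + \<omega> \<rho>)"
        using sol by (intro B_op_nonneg_of_touching_below[OF sch]) auto
    qed
  qed
  then show ?thesis
    using cons \<open>x0 \<in> closure \<Omega>\<close> \<open>\<phi> \<in> Cb_inf\<close> unfolding consistent_def by (meson order_trans)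
qed

lemma eventually_boundary_le:
  fixes u :: "real \<Rightarrow> 'a::metric_space \<Rightarrow> real"
  assumes "open \<Omega>" and "isCont \<Phi> x0" and "x0 \<in> \<Omega> \<or> usc_env UNIV g x0 < ereal (\<Phi> x0)"
    and outside: "\<forall>\<rho>>0. \<forall>y. y \<notin> \<Omega> \<longrightarrow> u \<rho> y = g y"
  shows "eventually (\<lambda>y. y \<notin> \<Omega> \<longrightarrow> (\<forall>\<rho>>0. u \<rho> y \<le> \<Phi> y)) (nhds x0)"
proof (cases "x0 \<in> \<Omega>")
  case True
  with \<open>open \<Omega>\<close> have "eventually (\<lambda>y. y \<in> \<Omega>) (nhds x0)"
    by (rule eventually_nhds_in_open)
  then show ?thesis
    by (rule eventually_mono) simp
next
  case False
  then have "usc_env UNIV g x0 < ereal (\<Phi> x0)"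
    using assms(3) by simp
  from ereal_dense2[OF this] obtain a where "usc_env UNIV g x0 < ereal a" "ereal a < ereal (\<Phi> x0)"
    by blast
  then have "a < \<Phi> x0" "eventually (\<lambda>y. g y < a) (nhds x0)"
    unfolding usc_env_def by (auto dest: Limsup_lessD)
  note \<open>eventually (\<lambda>y. g y < a) (nhds x0)\<close>
  moreover have "eventually (\<lambda>y. a < \<Phi> y) (nhds x0)"
    using isCont_eventually_greater[OF \<open>isCont \<Phi> x0\<close>, of "\<Phi> x0 - a"] \<open>a < \<Phi> x0\<close> by simp
  ultimately show ?thesis
    by eventually_elim (use outside in \<open>fastforce\<close>)
qed

section \<open>The half-relaxed limits are viscosity sub- and supersolutions\<close>

lemma upper_relaxed_limit_subsolution_at:
  fixes u :: "real \<Rightarrow> real^'n::finite \<Rightarrow> real"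
  assumes "open \<Omega>" and "Cb_inf \<subseteq> X" and sch: "scheme_assms \<Omega> X A" and cons: "consistent \<Omega> A g F"
    and sol: "\<forall>\<rho>>0. dpp_sol \<Omega> X A g \<rho> (u \<rho>)" and bnd: "\<forall>\<rho>>0. \<forall>y. \<bar>u \<rho> y\<bar> \<le> M"
    and "\<phi> \<in> Cb_inf" and "x0 \<in> closure \<Omega>"
    and max: "\<forall>y\<in>closure \<Omega>. upper_relaxed_limit u y - \<phi> y \<le> upper_relaxed_limit u x0 - \<phi> x0"
    and touching: "x0 \<in> \<Omega> \<or> usc_env UNIV g x0 < ereal (upper_relaxed_limit u x0)"
  shows "if x0 \<in> \<Omega> then F_lower \<Omega> F x0 (upper_relaxed_limit u x0) (grad \<phi> x0) (hess \<phi> x0) \<le> 0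
    else min (ereal (upper_relaxed_limit u x0) - usc_env UNIV g x0)
      (F_lower \<Omega> F x0 (upper_relaxed_limit u x0) (grad \<phi> x0) (hess \<phi> x0)) \<le> 0"
proof -
  let ?U = "upper_relaxed_limit u"
  define c where "c = ?U x0 - \<phi> x0"
  have \<Phi>: "(\<lambda>y. \<phi> y + c) \<in> Cb_inf"
    using \<open>\<phi> \<in> Cb_inf\<close> by (intro Cb_inf_add Cb_inf_const)
  have le: "\<forall>y\<in>closure \<Omega>. ?U y \<le> \<phi> y + c"
    using max unfolding c_def by fastforce
  have "eventually (\<lambda>y. y \<notin> \<Omega> \<longrightarrow> (\<forall>\<rho>>0. u \<rho> y \<le> \<phi> y + c)) (nhds x0)"
    using touching sol \<Phi> \<open>open \<Omega>\<close> Cb_inf_continuous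
    by (intro eventually_boundary_le) (auto simp: c_def continuous_on_eq_continuous_at dpp_sol_outside)
  from upper_relaxed_limit_touching[OF bnd \<Phi> le _ this]
  obtain K where K: "\<forall>\<omega>. (\<forall>\<rho>>0. 0 < \<omega> \<rho>) \<longrightarrow> frequently (\<lambda>(\<rho>, y, \<xi>). 0 < \<rho>
      \<and> (\<forall>z. u \<rho> z \<le> \<phi> z + c + K * tanh_penalty x0 z + \<xi>)
      \<and> \<phi> y + c + K * tanh_penalty x0 y + \<xi> - \<omega> \<rho> \<le> u \<rho> y) (at_right 0 \<times>\<^sub>F nhds x0 \<times>\<^sub>F nhds 0)"
    unfolding c_def by auto
  define \<phi>1 where "\<phi>1 = (\<lambda>y. \<phi> y + (c + K * tanh_penalty x0 y))"
  have "\<phi>1 \<in> Cb_inf"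
    unfolding \<phi>1_def using \<open>\<phi> \<in> Cb_inf\<close> tanh_penalty_Cb_inf
    by (intro Cb_inf_add Cb_inf_const Cb_inf_cmult)
  moreover have "\<phi>1 x0 = ?U x0"
    unfolding \<phi>1_def c_def by (simp add: tanh_penalty_self)
  moreover have "grad \<phi>1 x0 = grad \<phi> x0" and "hess \<phi>1 x0 = hess \<phi> x0"
    unfolding \<phi>1_def using \<open>\<phi> \<in> Cb_inf\<close> tanh_penalty_Cb_inf
    by (rule grad_add_flat[OF _ _ grad_tanh_penalty], rule hess_add_flat[OF _ _ hess_tanh_penalty])
  moreover have "\<forall>\<omega>. (\<forall>\<rho>>0. 0 < \<omega> \<rho>) \<longrightarrow> frequently (\<lambda>(\<rho>, y, \<xi>). 0 < \<rho>
      \<and> (\<forall>z. u \<rho> z \<le> \<phi>1 z + \<xi>) \<and> \<phi>1 y + \<xi> - \<omega> \<rho> \<le> u \<rho> y) (at_right 0 \<times>\<^sub>F nhds x0 \<times>\<^sub>F nhds 0)"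
    using K unfolding \<phi>1_def by (simp add: add.assoc)
  ultimately show ?thesis
    using subsolution_inequality_of_consistency[OF cons sch \<open>Cb_inf \<subseteq> X\<close> sol \<open>x0 \<in> closure \<Omega>\<close>, of \<phi>1]
    by (simp split: if_split_asm)
qed

lemma pde_subsol_upper_relaxed_limit:
  fixes u :: "real \<Rightarrow> real^'n::finite \<Rightarrow> real"
  assumes "open \<Omega>" and "Cb_inf \<subseteq> X" and "scheme_assms \<Omega> X A" and "consistent \<Omega> A g F"
    and "\<forall>\<rho>>0. dpp_sol \<Omega> X A g \<rho> (u \<rho>)" and bnd: "\<forall>\<rho>>0. \<forall>y. \<bar>u \<rho> y\<bar> \<le> M"
  shows "pde_subsol \<Omega> F g (upper_relaxed_limit u)"
  unfolding pde_subsol_def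
proof (intro conjI ballI impI)
  let ?U = "upper_relaxed_limit u"
  show "?U \<in> Xbar"
    unfolding Xbar_iff using abs_upper_relaxed_limit_le[OF bnd] by blast
  have ustar: "ustar \<Omega> ?U y = ?U y" if "y \<in> closure \<Omega>" for y
    using ustar_eq_of_usc_on[OF upper_relaxed_limit_usc_on[OF bnd] that] .
  fix \<phi> x0 assume "\<phi> \<in> Cb_inf" and "x0 \<in> closure \<Omega>"
    and "\<forall>y\<in>closure \<Omega>. ustar \<Omega> ?U y - \<phi> y \<le> ustar \<Omega> ?U x0 - \<phi> x0"
  then have max: "\<forall>y\<in>closure \<Omega>. ?U y - \<phi> y \<le> ?U x0 - \<phi> x0"
    using ustar by simp
  show "if x0 \<in> \<Omega> then F_lower \<Omega> F x0 (ustar \<Omega> ?U x0) (grad \<phi> x0) (hess \<phi> x0) \<le> 0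
      else min (ereal (ustar \<Omega> ?U x0) - usc_env UNIV g x0)
        (F_lower \<Omega> F x0 (ustar \<Omega> ?U x0) (grad \<phi> x0) (hess \<phi> x0)) \<le> 0"
  proof (cases "x0 \<in> \<Omega> \<or> usc_env UNIV g x0 < ereal (?U x0)")
    case True
    from upper_relaxed_limit_subsolution_at[OF assms \<open>\<phi> \<in> Cb_inf\<close> \<open>x0 \<in> closure \<Omega>\<close> max True]
    show ?thesis
      by (simp add: ustar[OF \<open>x0 \<in> closure \<Omega>\<close>])
  next
    case False
    then show ?thesis
      by (cases "usc_env UNIV g x0") (auto simp: ustar[OF \<open>x0 \<in> closure \<Omega>\<close>] min_le_iff_disj)
  qed
qed

lemma lower_relaxed_limit_supersolution_at:
  fixes u :: "real \<Rightarrow> real^'n::finite \<Rightarrow> real"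
  assumes "open \<Omega>" and "Cb_inf \<subseteq> X" and sch: "scheme_assms \<Omega> X A" and cons: "consistent \<Omega> A g F"
    and sol: "\<forall>\<rho>>0. dpp_sol \<Omega> X A g \<rho> (u \<rho>)" and bnd: "\<forall>\<rho>>0. \<forall>y. \<bar>u \<rho> y\<bar> \<le> M"
    and "\<phi> \<in> Cb_inf" and "x0 \<in> closure \<Omega>"
    and min: "\<forall>y\<in>closure \<Omega>. lower_relaxed_limit u x0 - \<phi> x0 \<le> lower_relaxed_limit u y - \<phi> y"
    and touching: "x0 \<in> \<Omega> \<or> ereal (lower_relaxed_limit u x0) < lsc_env UNIV g x0"
  shows "if x0 \<in> \<Omega> then 0 \<le> F_upper \<Omega> F x0 (lower_relaxed_limit u x0) (grad \<phi> x0) (hess \<phi> x0)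
    else 0 \<le> max (ereal (lower_relaxed_limit u x0) - lsc_env UNIV g x0)
      (F_upper \<Omega> F x0 (lower_relaxed_limit u x0) (grad \<phi> x0) (hess \<phi> x0))"
proof -
  let ?L = "lower_relaxed_limit u" and ?v = "\<lambda>\<rho> y. - u \<rho> y"
  have bnd': "\<forall>\<rho>>0. \<forall>y. \<bar>?v \<rho> y\<bar> \<le> M"
    using bnd by simp
  define c where "c = ?L x0 - \<phi> x0"
  have \<Phi>: "(\<lambda>y. - (\<phi> y + c)) \<in> Cb_inf"
    using \<open>\<phi> \<in> Cb_inf\<close> by (intro Cb_inf_uminus Cb_inf_add Cb_inf_const)
  have le: "\<forall>y\<in>closure \<Omega>. upper_relaxed_limit ?v y \<le> - (\<phi> y + c)"
    using min unfolding c_def lower_relaxed_limit_eq_uminus by fastforce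
  have "x0 \<in> \<Omega> \<or> usc_env UNIV (\<lambda>y. - g y) x0 < ereal (- (\<phi> x0 + c))"
    using touching ereal_less_uminus_reorder[of "ereal (?L x0)" "usc_env UNIV (\<lambda>y. - g y) x0"]
    unfolding lsc_env_uminus c_def by auto
  then have "eventually (\<lambda>y. y \<notin> \<Omega> \<longrightarrow> (\<forall>\<rho>>0. ?v \<rho> y \<le> - (\<phi> y + c))) (nhds x0)"
    using sol \<Phi> \<open>open \<Omega>\<close> Cb_inf_continuous
    by (intro eventually_boundary_le) (auto simp: continuous_on_eq_continuous_at dpp_sol_outside)
  from upper_relaxed_limit_touching[OF bnd' \<Phi> le _ this]
  obtain K where K: "\<forall>\<omega>. (\<forall>\<rho>>0. 0 < \<omega> \<rho>) \<longrightarrow> frequently (\<lambda>(\<rho>, y, \<xi>). 0 < \<rho>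
      \<and> (\<forall>z. - u \<rho> z \<le> - (\<phi> z + c) + K * tanh_penalty x0 z + \<xi>)
      \<and> - (\<phi> y + c) + K * tanh_penalty x0 y + \<xi> - \<omega> \<rho> \<le> - u \<rho> y) (at_right 0 \<times>\<^sub>F nhds x0 \<times>\<^sub>F nhds 0)"
    unfolding c_def lower_relaxed_limit_eq_uminus by auto
  define \<phi>1 where "\<phi>1 = (\<lambda>y. \<phi> y + (c + (- K) * tanh_penalty x0 y))"
  have "\<phi>1 \<in> Cb_inf"
    unfolding \<phi>1_def using \<open>\<phi> \<in> Cb_inf\<close> tanh_penalty_Cb_inf
    by (intro Cb_inf_add Cb_inf_const Cb_inf_cmult)
  moreover have "\<phi>1 x0 = ?L x0"
    unfolding \<phi>1_def c_def by (simp add: tanh_penalty_self)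
  moreover have "grad \<phi>1 x0 = grad \<phi> x0" and "hess \<phi>1 x0 = hess \<phi> x0"
    unfolding \<phi>1_def using \<open>\<phi> \<in> Cb_inf\<close> tanh_penalty_Cb_inf
    by (rule grad_add_flat[OF _ _ grad_tanh_penalty], rule hess_add_flat[OF _ _ hess_tanh_penalty])
  moreover have "\<forall>\<omega>. (\<forall>\<rho>>0. 0 < \<omega> \<rho>) \<longrightarrow> frequently (\<lambda>(\<rho>, y, \<xi>). 0 < \<rho>
      \<and> (\<forall>z. \<phi>1 z + \<xi> \<le> u \<rho> z) \<and> u \<rho> y \<le> \<phi>1 y + \<xi> + \<omega> \<rho>) (at_right 0 \<times>\<^sub>F nhds x0 \<times>\<^sub>F nhds 0)"
  proof (intro allI impI)
    fix \<omega> :: "real \<Rightarrow> real" assume "\<forall>\<rho>>0. 0 < \<omega> \<rho>"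
    from frequently_at_right_prod_nhds_nhds_uminus[OF K[THEN spec[where x=\<omega>], THEN mp, OF this]]
    show "frequently (\<lambda>(\<rho>, y, \<xi>). 0 < \<rho> \<and> (\<forall>z. \<phi>1 z + \<xi> \<le> u \<rho> z) \<and> u \<rho> y \<le> \<phi>1 y + \<xi> + \<omega> \<rho>)
        (at_right 0 \<times>\<^sub>F nhds x0 \<times>\<^sub>F nhds 0)"
      by (rule frequently_elim1) (auto simp: \<phi>1_def algebra_simps)
  qed
  ultimately show ?thesis
    using supersolution_inequality_of_consistency[OF cons sch \<open>Cb_inf \<subseteq> X\<close> sol \<open>x0 \<in> closure \<Omega>\<close>, of \<phi>1]
    by (simp split: if_split_asm)
qed

lemma pde_supersol_lower_relaxed_limit:
  fixes u :: "real \<Rightarrow> real^'n::finite \<Rightarrow> real"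
  assumes "open \<Omega>" and "Cb_inf \<subseteq> X" and "scheme_assms \<Omega> X A" and "consistent \<Omega> A g F"
    and "\<forall>\<rho>>0. dpp_sol \<Omega> X A g \<rho> (u \<rho>)" and bnd: "\<forall>\<rho>>0. \<forall>y. \<bar>u \<rho> y\<bar> \<le> M"
  shows "pde_supersol \<Omega> F g (lower_relaxed_limit u)"
  unfolding pde_supersol_def
proof (intro conjI ballI impI)
  let ?L = "lower_relaxed_limit u" and ?v = "\<lambda>\<rho> y. - u \<rho> y"
  have bnd': "\<forall>\<rho>>0. \<forall>y. \<bar>?v \<rho> y\<bar> \<le> M"
    using bnd by simp
  show "?L \<in> Xbar"
    unfolding Xbar_iff lower_relaxed_limit_eq_uminus using abs_upper_relaxed_limit_le[OF bnd'] by auto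
  have lstar: "lstar \<Omega> ?L y = ?L y" if "y \<in> closure \<Omega>" for y
    using ustar_eq_of_usc_on[OF upper_relaxed_limit_usc_on[OF bnd'] that]
    unfolding lstar_eq_uminus_ustar lower_relaxed_limit_eq_uminus by simp
  fix \<phi> x0 assume "\<phi> \<in> Cb_inf" and "x0 \<in> closure \<Omega>"
    and "\<forall>y\<in>closure \<Omega>. lstar \<Omega> ?L x0 - \<phi> x0 \<le> lstar \<Omega> ?L y - \<phi> y"
  then have min: "\<forall>y\<in>closure \<Omega>. ?L x0 - \<phi> x0 \<le> ?L y - \<phi> y"
    using lstar by simp
  show "if x0 \<in> \<Omega> then 0 \<le> F_upper \<Omega> F x0 (lstar \<Omega> ?L x0) (grad \<phi> x0) (hess \<phi> x0)
      else 0 \<le> max (ereal (lstar \<Omega> ?L x0) - lsc_env UNIV g x0)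
        (F_upper \<Omega> F x0 (lstar \<Omega> ?L x0) (grad \<phi> x0) (hess \<phi> x0))"
  proof (cases "x0 \<in> \<Omega> \<or> ereal (?L x0) < lsc_env UNIV g x0")
    case True
    from lower_relaxed_limit_supersolution_at[OF assms \<open>\<phi> \<in> Cb_inf\<close> \<open>x0 \<in> closure \<Omega>\<close> min True]
    show ?thesis
      by (simp add: lstar[OF \<open>x0 \<in> closure \<Omega>\<close>])
  next
    case False
    then show ?thesis
      by (cases "lsc_env UNIV g x0") (auto simp: lstar[OF \<open>x0 \<in> closure \<Omega>\<close>] le_max_iff_disj)
  qed
qed

lemma
  fixes u :: "real \<Rightarrow> real^'n::finite \<Rightarrow> real"
  assumes "open \<Omega>" and "Cb_inf \<subseteq> X" and "scheme_assms \<Omega> X A" and "consistent \<Omega> A g F"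
    and "\<forall>\<rho>>0. dpp_sol \<Omega> X A g \<rho> (u \<rho>)" and bnd: "\<forall>\<rho>>0. \<forall>y. \<bar>u \<rho> y\<bar> \<le> M"
    and "strong_uniqueness \<Omega> F g"
  shows lower_eq_upper_relaxed_limit: "x \<in> closure \<Omega> \<Longrightarrow> lower_relaxed_limit u x = upper_relaxed_limit u x"
    and pde_sol_upper_relaxed_limit: "pde_sol \<Omega> F g (upper_relaxed_limit u)"
proof -
  let ?U = "upper_relaxed_limit u" and ?L = "lower_relaxed_limit u"
  have sub: "pde_subsol \<Omega> F g ?U"
    by (rule pde_subsol_upper_relaxed_limit[OF assms(1-6)])
  have super: "pde_supersol \<Omega> F g ?L"
    by (rule pde_supersol_lower_relaxed_limit[OF assms(1-6)])
  have eq: "?L x = ?U x" if "x \<in> closure \<Omega>" for x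
  proof (rule antisym)
    show "?L x \<le> ?U x"
      by (rule lower_relaxed_limit_le_upper[OF bnd])
    show "?U x \<le> ?L x"
      using \<open>strong_uniqueness \<Omega> F g\<close> sub super upper_relaxed_limit_usc_on[OF bnd]
        lower_relaxed_limit_lsc_on[OF bnd] that
      unfolding strong_uniqueness_def by blast
  qed
  then show "x \<in> closure \<Omega> \<Longrightarrow> ?L x = ?U x" .
  show "pde_sol \<Omega> F g ?U"
    using sub pde_supersol_cong[OF super _ eq] unfolding pde_sol_def pde_subsol_def by blast
qed

theorem mainTheorem4:
  fixes \<Omega> :: "(real^'n::finite) set"
    and X :: "(real^'n \<Rightarrow> real) set"
    and g :: "real^'n \<Rightarrow> real"
    and A :: "real \<Rightarrow> real^'n \<Rightarrow> (real^'n \<Rightarrow> real) \<Rightarrow> real \<Rightarrow> real"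
    and F :: "real^'n \<Rightarrow> real \<Rightarrow> real^'n \<Rightarrow> real^'n^'n \<Rightarrow> real"
    and u :: "real \<Rightarrow> real^'n \<Rightarrow> real"
  assumes "open \<Omega>"
    and "X \<subseteq> Xbar" and "Cb_inf \<subseteq> X"
    and "g \<in> Xbar"
    and "proper_F \<Omega> F" and "elliptic_F \<Omega> F"
    and "scheme_assms \<Omega> X A"
    and "consistent \<Omega> A g F"
    and "\<And>\<rho>. \<rho> > 0 \<Longrightarrow> dpp_sol \<Omega> X A g \<rho> (u \<rho>)"
    and "\<exists>M. \<forall>\<rho>>0. \<forall>x. \<bar>u \<rho> x\<bar> \<le> M"
    and "strong_uniqueness \<Omega> F g"
  shows "\<exists>v. pde_sol \<Omega> F g v
           \<and> (\<forall>w. pde_sol \<Omega> F g w \<longrightarrow> (\<forall>x\<in>closure \<Omega>. w x = v x))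
           \<and> (\<forall>K. compact K \<and> K \<subseteq> closure \<Omega> \<longrightarrow> uniform_limit K u v (at_right 0))"
proof -
  obtain M where bnd: "\<forall>\<rho>>0. \<forall>y. \<bar>u \<rho> y\<bar> \<le> M"
    using assms(10) by blast
  have sol: "\<forall>\<rho>>0. dpp_sol \<Omega> X A g \<rho> (u \<rho>)"
    using assms(9) by blast
  note eq = lower_eq_upper_relaxed_limit[OF assms(1,3,7,8) sol bnd assms(11)]
  have "pde_sol \<Omega> F g (upper_relaxed_limit u)"
    by (rule pde_sol_upper_relaxed_limit[OF assms(1,3,7,8) sol bnd assms(11)])
  moreover have "\<forall>x\<in>closure \<Omega>. w x = upper_relaxed_limit u x" if "pde_sol \<Omega> F g w" for w
    using pde_sol_unique[OF assms(11) \<open>pde_sol \<Omega> F g (upper_relaxed_limit u)\<close> that] by blast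
  moreover have "uniform_limit K u (upper_relaxed_limit u) (at_right 0)"
    if "compact K" "K \<subseteq> closure \<Omega>" for K
    using uniform_limit_upper_relaxed_limit[OF bnd \<open>compact K\<close>] eq that by blast
  ultimately show ?thesis
    by blast
qed

end
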